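(* With $\mathcal{F}$ the weaved flag of type $(m_1,\dots,m_2-m_1,m_2,\dots,m_k,\dots,n-m_k)$, let $\beta\in\mathbb{F}_{q^n}^\ast\setminus\mathbb{F}_{q^{m_1}}^\ast$ satisfy $\langle\beta\rangle\cap\mathbb{F}_{q^{m_1}}^\ast=\langle\beta\rangle\cap\mathbb{F}_{q^{m_k}}^\ast$. If $L_{k+1}=n/m_k\le3$, then $\mathrm{Orb}_\beta(\mathcal{F})$ is an optimum distance flag code.
   Context: $q$ prime power; $m_1<\dots<m_k<m_{k+1}=n$ with $m_i\mid m_{i+1}$; $L_i=m_i/m_{i-1}$ for $2\le i\le k+1$; $\alpha$ primitive in $\mathbb{F}_{q^n}$; $\alpha_i=\alpha^{(q^n-1)/(q^{m_i}-1)}$; $\mathcal{F}^i_j=\bigoplus_{t=0}^{j-1}\mathbb{F}_{q^{m_i}}\alpha_{i+1}^t$ ($\mathbb{F}_q$-subspaces of $\mathbb{F}_{q^n}$) for $1\le i\le k$, $1\le j\le L_{i+1}-1$, and $\mathcal{F}=(\mathcal{F}^1_1,\dots,\mathcal{F}^1_{L_2-1},\dots,\mathcal{F}^k_1,\dots,\mathcal{F}^k_{L_{k+1}-1})$. $d_S(\mathcal{U},\mathcal{V})=\dim(\mathcal{U}+\mathcal{V})-\dim(\mathcal{U}\cap\mathcal{V})$; $d_f$ is the sum of $d_S$ over positions; $\mathrm{Orb}_\beta(\mathcal{F})=\{\mathcal{F}\beta^j:j\ge0\}$ with $\mathcal{F}\beta^j$ obtained by multiplying each subspace by $\beta^j$.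 A flag code of type $(t_1,\dots,t_r)$ on $\mathbb{F}_{q^n}$ is an optimum distance flag code if its minimum distance (minimum $d_f$ between distinct codewords) equals $2(\sum_{t_i\le\lfloor n/2\rfloor}t_i+\sum_{t_i>\lfloor n/2\rfloor}(n-t_i))$. *)

theory Defs
  imports "HOL-Computational_Algebra.Primes"
begin

text \<open>Ambient field: a finite field type 'a with card UNIV = q^n.
  The subfield F_{q^m} (for m dividing n) is the set of roots of x^(q^m) - x.\<close>

definition subfield :: "nat \<Rightarrow> nat \<Rightarrow> 'a::{finite,field} set" where
  "subfield q m = {x. x ^ (q ^ m) = x}"

definition Fq_span :: "nat \<Rightarrow> 'a::{finite,field} set \<Rightarrow> 'a set" where
  "Fq_span q S = {(\<Sum>v\<in>T. c v * v) | T c. T \<subseteq> S \<and> finite T \<and> (\<forall>v\<in>T. c v \<in> subfield q 1)}"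

definition Fq_subspace :: "nat \<Rightarrow> 'a::{finite,field} set \<Rightarrow> bool" where
  "Fq_subspace q V \<longleftrightarrow> 0 \<in> V \<and> (\<forall>x\<in>V. \<forall>y\<in>V. x + y \<in> V)
     \<and> (\<forall>c\<in>subfield q 1. \<forall>x\<in>V. c * x \<in> V)"

definition Fq_dim :: "nat \<Rightarrow> 'a::{finite,field} set \<Rightarrow> nat" where
  "Fq_dim q V = (LEAST d. \<exists>S. S \<subseteq> V \<and> finite S \<and> card S = d \<and> Fq_span q S = V)"

definition subspace_sum :: "'a::{finite,field} set \<Rightarrow> 'a set \<Rightarrow> 'a set" where
  "subspace_sum U V = {u + v | u v. u \<in> U \<and> v \<in> V}"

definition subspace_dist :: "nat \<Rightarrow> 'a::{finite,field} set \<Rightarrow> 'a set \<Rightarrow> nat" where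
  "subspace_dist q U V = Fq_dim q (subspace_sum U V) - Fq_dim q (U \<inter> V)"

definition flag_dist :: "nat \<Rightarrow> 'a::{finite,field} set list \<Rightarrow> 'a set list \<Rightarrow> nat" where
  "flag_dist q F G = (\<Sum>i<length F. subspace_dist q (F ! i) (G ! i))"

definition is_flag_of_type :: "nat \<Rightarrow> nat list \<Rightarrow> 'a::{finite,field} set list \<Rightarrow> bool" where
  "is_flag_of_type q ts F \<longleftrightarrow> length F = length ts
     \<and> (\<forall>i<length F. Fq_subspace q (F ! i) \<and> Fq_dim q (F ! i) = ts ! i)
     \<and> (\<forall>i. Suc i < length F \<longrightarrow> F ! i \<subset> F ! Suc i)"

definition min_flag_dist :: "nat \<Rightarrow> 'a::{finite,field} set list set \<Rightarrow> nat" where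
  "min_flag_dist q C = Min {flag_dist q F G | F G. F \<in> C \<and> G \<in> C \<and> F \<noteq> G}"

definition optimum_distance_flag_code ::
  "nat \<Rightarrow> nat \<Rightarrow> nat list \<Rightarrow> 'a::{finite,field} set list set \<Rightarrow> bool" where
  "optimum_distance_flag_code q n ts C \<longleftrightarrow>
     (\<forall>F\<in>C. is_flag_of_type q ts F) \<and>
     min_flag_dist q C =
       2 * ((\<Sum>t\<leftarrow>ts. if t \<le> n div 2 then t else 0)
          + (\<Sum>t\<leftarrow>ts. if t > n div 2 then n - t else 0))"

definition flag_orbit :: "'a::{finite,field} \<Rightarrow> 'a set list \<Rightarrow> 'a set list set" where
  "flag_orbit \<beta> F = {map (\<lambda>U. (\<lambda>x. x * \<beta> ^ j) ` U) F | j::nat. True}"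

definition alpha_i :: "nat \<Rightarrow> nat \<Rightarrow> 'a::{finite,field} \<Rightarrow> nat \<Rightarrow> 'a" where
  "alpha_i q n \<alpha> mi = \<alpha> ^ ((q ^ n - 1) div (q ^ mi - 1))"

definition weave_sub :: "nat \<Rightarrow> nat \<Rightarrow> 'a::{finite,field} \<Rightarrow> (nat \<Rightarrow> nat) \<Rightarrow> nat \<Rightarrow> nat \<Rightarrow> 'a set" where
  "weave_sub q n \<alpha> m i j =
     {(\<Sum>t<j. c t * alpha_i q n \<alpha> (m (Suc i)) ^ t) | c. \<forall>t<j. c t \<in> subfield q (m i)}"

definition weaved_flag :: "nat \<Rightarrow> nat \<Rightarrow> 'a::{finite,field} \<Rightarrow> (nat \<Rightarrow> nat) \<Rightarrow> nat \<Rightarrow> 'a set list" where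
  "weaved_flag q n \<alpha> m k =
     concat (map (\<lambda>i. map (\<lambda>j. weave_sub q n \<alpha> m i j) [1..<m (Suc i) div m i]) [1..<Suc k])"

definition weaved_type :: "(nat \<Rightarrow> nat) \<Rightarrow> nat \<Rightarrow> nat list" where
  "weaved_type m k = concat (map (\<lambda>i. map (\<lambda>j. j * m i) [1..<m (Suc i) div m i]) [1..<Suc k])"

end

theory Submission
  imports Defs "HOL-Library.FuncSet" "HOL-Library.Product_Lexorder"
begin

text \<open>Two distinct codewords \<open>\<beta>^a F\<close> and \<open>\<beta>^b F\<close> differ by the factor \<open>\<gamma> = \<beta>^b / \<beta>^a\<close>,
  a power of \<open>\<beta>\<close> that does not lie in \<open>F_(q^m_1)\<close> (it would fix every subspace of the flag),
  hence, by the hypothesis on \<open>\<langle>\<beta>\<rangle>\<close>, not in \<open>K = F_(q^m_k)\<close>. A subspace \<open>W \<subseteq> K\<close> of the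
  flag then meets \<open>\<gamma> W\<close> only in \<open>0\<close>, so in that position the two flags are at distance
  \<open>2 dim W\<close>. Since \<open>n / m_k \<le> 3\<close>, the only subspace not inside \<open>K\<close> occurs for \<open>n = 3 m_k\<close>:
  the plane \<open>W = K + K \<alpha>_(k+1)\<close> of the three-dimensional \<open>K\<close>-space \<open>F_(q^n)\<close>. It is not
  \<open>\<gamma>\<close>-stable, since its stabiliser would be a field of degree 2 over \<open>K\<close> inside a field of
  degree 3; so \<open>W + \<gamma> W\<close> is everything and \<open>W \<inter> \<gamma> W\<close> is a line, giving distance
  \<open>2 (n - dim W)\<close>. Thus every pair of codewords is at the maximal distance in every position.\<close>

section \<open>Linear algebra over a subfield\<close>

definition is_subfield :: "'a::field set \<Rightarrow> bool" where
  "is_subfield R \<longleftrightarrow> 0 \<in> R \<and> 1 \<in> R \<and> (\<forall>x\<in>R. \<forall>y\<in>R. x + y \<in> R \<and> x * y \<in> R)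
     \<and> (\<forall>x\<in>R. - x \<in> R) \<and> (\<forall>x\<in>R. x \<noteq> 0 \<longrightarrow> inverse x \<in> R)"

definition is_subspace :: "'a::field set \<Rightarrow> 'a set \<Rightarrow> bool" where
  "is_subspace R V \<longleftrightarrow> 0 \<in> V \<and> (\<forall>x\<in>V. \<forall>y\<in>V. x + y \<in> V) \<and> (\<forall>c\<in>R. \<forall>x\<in>V. c * x \<in> V)"

definition lin_span :: "'a::field set \<Rightarrow> 'a set \<Rightarrow> 'a set" where
  "lin_span R S = {(\<Sum>v\<in>S. c v * v) | c. \<forall>v\<in>S. c v \<in> R}"

lemma lin_spanI: "\<forall>v\<in>S. c v \<in> R \<Longrightarrow> x = (\<Sum>v\<in>S. c v * v) \<Longrightarrow> x \<in> lin_span R S"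
  unfolding lin_span_def by blast

lemma is_subspace_sum_closed:
  assumes "is_subspace R V" "\<forall>t\<in>T. f t \<in> V" shows "sum f T \<in> V"
proof (cases "finite T")
  case True
  then show ?thesis using assms(2)
    by (induction T rule: finite_induct) (use assms(1) in \<open>auto simp: is_subspace_def\<close>)
qed (use assms(1) in \<open>simp add: is_subspace_def\<close>)

lemma is_subspace_diff:
  assumes "is_subfield R" "is_subspace R V" "x \<in> V" "y \<in> V" shows "x - y \<in> V"
proof -
  have "(- 1) * y \<in> V" using assms unfolding is_subfield_def is_subspace_def by blast
  then show ?thesis using assms(2,3) unfolding is_subspace_def
    by (metis diff_conv_add_uminus mult_minus1)
qed

lemma is_subspace_subfield_mono: "is_subspace R V \<Longrightarrow> R' \<subseteq> R \<Longrightarrow> is_subspace R' V"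
  unfolding is_subspace_def by blast

lemma is_subspace_Int: "is_subspace R U \<Longrightarrow> is_subspace R V \<Longrightarrow> is_subspace R (U \<inter> V)"
  unfolding is_subspace_def by blast

lemma is_subspace_subspace_sum:
  assumes "is_subspace R U" "is_subspace R V" shows "is_subspace R (subspace_sum U V)"
  unfolding is_subspace_def
proof (intro conjI ballI)
  show "0 \<in> subspace_sum U V"
    using assms unfolding is_subspace_def subspace_sum_def by force
next
  fix x y assume "x \<in> subspace_sum U V" "y \<in> subspace_sum U V"
  then obtain u v u' v' where "u \<in> U" "v \<in> V" "u' \<in> U" "v' \<in> V" "x = u + v" "y = u' + v'"
    unfolding subspace_sum_def by blast
  moreover from this have "u + u' \<in> U" "v + v' \<in> V" using assms unfolding is_subspace_def by blast+
  moreover have "x + y = (u + u') + (v + v')" using \<open>x = u + v\<close> \<open>y = u' + v'\<close>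
    by (simp add: algebra_simps)
  ultimately show "x + y \<in> subspace_sum U V" unfolding subspace_sum_def by blast
next
  fix c x assume "c \<in> R" "x \<in> subspace_sum U V"
  then obtain u v where "u \<in> U" "v \<in> V" "x = u + v" unfolding subspace_sum_def by blast
  moreover from this have "c * u \<in> U" "c * v \<in> V" using assms \<open>c \<in> R\<close> unfolding is_subspace_def
    by blast+
  ultimately show "c * x \<in> subspace_sum U V"
    unfolding subspace_sum_def by (auto simp: distrib_left)
qed

lemma subspace_sum_superset1: "is_subspace R V \<Longrightarrow> U \<subseteq> subspace_sum U V"
  unfolding is_subspace_def subspace_sum_def by force

lemma subspace_sum_superset2: "is_subspace R U \<Longrightarrow> V \<subseteq> subspace_sum U V"
  unfolding is_subspace_def subspace_sum_def by force

lemma is_subspace_lin_span: assumes "is_subfield R" shows "is_subspace R (lin_span R S)"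
  unfolding is_subspace_def
proof (intro conjI ballI)
  show "0 \<in> lin_span R S"
    using assms by (intro lin_spanI[of S "\<lambda>_. 0"]) (auto simp: is_subfield_def)
next
  fix x y assume "x \<in> lin_span R S" "y \<in> lin_span R S"
  then obtain c d where "x = (\<Sum>v\<in>S. c v * v)" "\<forall>v\<in>S. c v \<in> R" "y = (\<Sum>v\<in>S. d v * v)" "\<forall>v\<in>S. d v \<in> R"
    unfolding lin_span_def by blast
  then show "x + y \<in> lin_span R S"
    using assms by (intro lin_spanI[of S "\<lambda>v. c v + d v"])
      (auto simp: is_subfield_def sum.distrib distrib_right)
next
  fix r x assume "r \<in> R" "x \<in> lin_span R S"
  then obtain c where "x = (\<Sum>v\<in>S. c v * v)" "\<forall>v\<in>S. c v \<in> R" unfolding lin_span_def by blast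
  then show "r * x \<in> lin_span R S"
    using assms \<open>r \<in> R\<close> by (intro lin_spanI[of S "\<lambda>v. r * c v"])
      (auto simp: is_subfield_def sum_distrib_left mult.assoc)
qed

lemma lin_span_mult_closed:
  assumes "is_subspace R V" "\<forall>v\<in>S. w * v \<in> V" "x \<in> lin_span R S"
  shows "w * x \<in> V"
proof -
  obtain c where c: "x = (\<Sum>v\<in>S. c v * v)" "\<forall>v\<in>S. c v \<in> R"
    using assms(3) unfolding lin_span_def by blast
  have "w * x = (\<Sum>v\<in>S. c v * (w * v))" by (simp add: c sum_distrib_left mult_ac)
  also have "\<dots> \<in> V"
    using assms(1,2) c(2)
    by (intro is_subspace_sum_closed[OF assms(1)]) (auto simp: is_subspace_def)
  finally show ?thesis .
qed

lemma lin_span_subset: "is_subspace R V \<Longrightarrow> S \<subseteq> V \<Longrightarrow> lin_span R S \<subseteq> V"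
  using lin_span_mult_closed[of R V S 1] by auto

lemma lin_span_superset: assumes "is_subfield R" "finite S" shows "S \<subseteq> lin_span R S"
proof
  fix v assume "v \<in> S"
  have "(\<Sum>u\<in>S. (if u = v then 1 else 0) * u) = (\<Sum>u\<in>S. if u = v then u else 0)"
    by (rule sum.cong) auto
  also have "\<dots> = v" using assms(2) \<open>v \<in> S\<close> by simp
  finally show "v \<in> lin_span R S"
    using assms(1)
    by (intro lin_spanI[of S "\<lambda>u. if u = v then 1 else 0"]) (auto simp: is_subfield_def)
qed

lemma card_lin_span_le:
  fixes S :: "'a::{finite,field} set"
  shows "card (lin_span R S) \<le> card R ^ card S"
proof -
  have "lin_span R S \<subseteq> (\<lambda>c. \<Sum>v\<in>S. c v * v) ` (S \<rightarrow>\<^sub>E R)"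
  proof
    fix x assume "x \<in> lin_span R S"
    then obtain c where c: "x = (\<Sum>v\<in>S. c v * v)" "\<forall>v\<in>S. c v \<in> R" unfolding lin_span_def by blast
    have "x = (\<Sum>v\<in>S. restrict c S v * v)" unfolding c(1) by (rule sum.cong) auto
    moreover have "restrict c S \<in> S \<rightarrow>\<^sub>E R" using c by auto
    ultimately show "x \<in> (\<lambda>c. \<Sum>v\<in>S. c v * v) ` (S \<rightarrow>\<^sub>E R)" by blast
  qed
  then have "card (lin_span R S) \<le> card ((\<lambda>c. \<Sum>v\<in>S. c v * v) ` (S \<rightarrow>\<^sub>E R))"
    by (intro card_mono) (auto intro!: finite_PiE)
  also have "\<dots> \<le> card (S \<rightarrow>\<^sub>E R)" by (rule card_image_le) (auto intro!: finite_PiE)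
  finally show ?thesis by (simp add: card_PiE)
qed

lemma card_ge_2_if_is_subfield: "is_subfield R \<Longrightarrow> 2 \<le> card (R::'a::{finite,field} set)"
  using card_mono[of R "{0, 1}"] by (auto simp: is_subfield_def)

lemma card_lin_span_insert:
  fixes S :: "'a::{finite,field} set"
  assumes R: "is_subfield R" and v: "v \<notin> lin_span R S"
  shows "card (lin_span R S) * card R \<le> card (lin_span R (insert v S))"
proof -
  have sub: "is_subspace R (lin_span R S)" "is_subspace R (lin_span R (insert v S))"
    using is_subspace_lin_span[OF R] by blast+
  have insert_span: "insert v S \<subseteq> lin_span R (insert v S)" by (rule lin_span_superset[OF R]) simp
  then have "lin_span R S \<subseteq> lin_span R (insert v S)" by (intro lin_span_subset[OF sub(2)]) auto
  then have "(\<lambda>(w, c). w + c * v) ` (lin_span R S \<times> R) \<subseteq> lin_span R (insert v S)"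
    using insert_span sub(2) unfolding is_subspace_def by auto
  moreover have "inj_on (\<lambda>(w, c). w + c * v) (lin_span R S \<times> R)"
  proof (rule inj_onI, clarsimp)
    fix w c w' c'
    assume h: "w \<in> lin_span R S" "c \<in> R" "w' \<in> lin_span R S" "c' \<in> R" "w + c * v = w' + c' * v"
    show "w = w' \<and> c = c'"
    proof (cases "c = c'")
      case False
      have "v = inverse (c - c') * (w' - w)"
        using h(5) False by (simp add: field_simps)
      moreover have "inverse (c - c') \<in> R"
        using R h(2,4) False unfolding is_subfield_def
        by (metis diff_conv_add_uminus eq_iff_diff_eq_0)
      moreover have "w' - w \<in> lin_span R S" using is_subspace_diff[OF R sub(1) h(3,1)] .
      ultimately have "v \<in> lin_span R S" using sub(1) unfolding is_subspace_def by metis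
      then show ?thesis using v by blast
    qed (use h in simp)
  qed
  ultimately show ?thesis
    using card_mono[OF finite, of _ "lin_span R (insert v S)"]
    by (metis card_image card_cartesian_product)
qed

text \<open>The hypothesis \<open>card (lin_span R S) = card R ^ card S\<close> says that \<open>S\<close> is free; a free
  family is enlarged one vector at a time until it spans \<open>V\<close>.\<close>

lemma subspace_basis_extension:
  fixes V :: "'a::{finite,field} set"
  assumes R: "is_subfield R" and V: "is_subspace R V"
  shows "S \<subseteq> V \<Longrightarrow> card (lin_span R S) = card R ^ card S \<Longrightarrow>
     \<exists>B. B \<subseteq> V \<and> lin_span R B = V \<and> card V = card R ^ card B"
proof (induction "card V - card (lin_span R S)" arbitrary: S rule: less_induct)
  case less
  have span_V: "lin_span R S \<subseteq> V" using lin_span_subset[OF V less(2)] .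
  show ?case
  proof (cases "lin_span R S = V")
    case True
    then show ?thesis using less by auto
  next
    case False
    then obtain v where v: "v \<in> V" "v \<notin> lin_span R S" using span_V by blast
    have "v \<notin> S" using v lin_span_superset[OF R, of S] by auto
    define S' where "S' = insert v S"
    have S'_V: "S' \<subseteq> V" using less v by (auto simp: S'_def)
    have card': "card (lin_span R S') = card R ^ card S'"
      using card_lin_span_insert[OF R v(2)] less(3) \<open>v \<notin> S\<close> card_lin_span_le[of R S']
      by (simp add: S'_def mult.commute)
    have "card (lin_span R S) < card (lin_span R S')"
      using less(3) card' \<open>v \<notin> S\<close> card_ge_2_if_is_subfield[OF R] by (simp add: S'_def)
    moreover have "card (lin_span R S') \<le> card V"
      using lin_span_subset[OF V S'_V] by (intro card_mono) auto
    ultimately have "card V - card (lin_span R S') < card V - card (lin_span R S)" by linarith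
    then show ?thesis using less(1)[OF _ S'_V card'] by blast
  qed
qed

lemma subspace_has_basis:
  fixes V :: "'a::{finite,field} set"
  assumes "is_subfield R" "is_subspace R V"
  shows "\<exists>B. B \<subseteq> V \<and> lin_span R B = V \<and> card V = card R ^ card B"
  using subspace_basis_extension[OF assms, of "{}"] assms(2)
  by (simp add: lin_span_def is_subspace_def)

lemma card_subspace_eq_power:
  fixes V :: "'a::{finite,field} set"
  shows "is_subfield R \<Longrightarrow> is_subspace R V \<Longrightarrow> \<exists>d. card V = card R ^ d"
  using subspace_has_basis by blast

lemma subspace_sum_fibre:
  assumes R: "is_subfield R" and U: "is_subspace R U" and V: "is_subspace R V"
    and uv: "u \<in> U" "v \<in> V"
  shows "{p \<in> U \<times> V. fst p + snd p = u + v} = (\<lambda>w. (u + w, v - w)) ` (U \<inter> V)"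
proof (intro equalityI subsetI)
  fix p assume "p \<in> {p \<in> U \<times> V. fst p + snd p = u + v}"
  then obtain u' v' where p: "p = (u', v')" "u' \<in> U" "v' \<in> V" "u' + v' = u + v" by auto
  have "u' - u \<in> U" "v - v' \<in> V"
    using p uv by (auto intro: is_subspace_diff[OF R U] is_subspace_diff[OF R V])
  moreover have "u' - u = v - v'" using p(4) by (simp add: algebra_simps)
  ultimately have "u' - u \<in> U \<inter> V" by simp
  moreover have "p = (u + (u' - u), v - (u' - u))" using p by (simp add: algebra_simps)
  ultimately show "p \<in> (\<lambda>w. (u + w, v - w)) ` (U \<inter> V)" by blast
next
  fix p assume "p \<in> (\<lambda>w. (u + w, v - w)) ` (U \<inter> V)"
  then obtain w where w: "w \<in> U" "w \<in> V" "p = (u + w, v - w)" by blast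
  have "u + w \<in> U" using U uv(1) w(1) unfolding is_subspace_def by blast
  moreover have "v - w \<in> V" using is_subspace_diff[OF R V uv(2) w(2)] .
  ultimately show "p \<in> {p \<in> U \<times> V. fst p + snd p = u + v}" using w(3) by simp
qed

lemma card_subspace_sum_mult_card_Int:
  fixes U V :: "'a::{finite,field} set"
  assumes R: "is_subfield R" and U: "is_subspace R U" and V: "is_subspace R V"
  shows "card (subspace_sum U V) * card (U \<inter> V) = card U * card V"
proof -
  define fibre where "fibre s = {p \<in> U \<times> V. fst p + snd p = s}" for s
  have fibre_card: "card (fibre s) = card (U \<inter> V)" if s: "s \<in> subspace_sum U V" for s
  proof -
    obtain u v where "u \<in> U" "v \<in> V" "s = u + v" using s unfolding subspace_sum_def by blast
    moreover have "inj_on (\<lambda>w. (u + w, v - w)) (U \<inter> V)" by (rule inj_onI) simp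
    ultimately show ?thesis
      unfolding fibre_def by (simp add: subspace_sum_fibre[OF R U V] card_image)
  qed
  have "U \<times> V = (\<Union>s\<in>subspace_sum U V. fibre s)"
  proof (intro equalityI subsetI)
    fix p assume "p \<in> U \<times> V"
    then obtain u v where "p = (u, v)" "u \<in> U" "v \<in> V" by blast
    then have "u + v \<in> subspace_sum U V" "p \<in> fibre (u + v)"
      unfolding subspace_sum_def fibre_def by (blast, simp)
    then show "p \<in> (\<Union>s\<in>subspace_sum U V. fibre s)" by blast
  qed (auto simp: fibre_def)
  moreover have "card (\<Union>s\<in>subspace_sum U V. fibre s) = (\<Sum>s\<in>subspace_sum U V. card (fibre s))"
    by (rule card_UN_disjoint) (auto simp: fibre_def)
  ultimately have "card (U \<times> V) = (\<Sum>s\<in>subspace_sum U V. card (fibre s))" by simp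
  also have "\<dots> = card (subspace_sum U V) * card (U \<inter> V)" by (simp add: fibre_card)
  finally show ?thesis by (simp add: card_cartesian_product)
qed

section \<open>Finite fields\<close>

lemma power_card_UNIV_minus_1:
  fixes x :: "'a::{finite,field}"
  assumes "x \<noteq> 0" shows "x ^ (card (UNIV :: 'a set) - 1) = 1"
proof -
  have "(\<Prod>y\<in>UNIV-{0}. x * y) = x ^ (card (UNIV :: 'a set) - 1) * \<Prod>(UNIV-{0})"
    by (simp add: prod.distrib card_Diff_singleton)
  moreover have "(\<Prod>y\<in>UNIV-{0}. x * y) = \<Prod>(UNIV-{0})"
    by (rule prod.reindex_bij_witness[of _ "\<lambda>y. y / x" "\<lambda>y. x * y"]) (use assms in auto)
  moreover have "\<Prod>(UNIV-{0::'a}) \<noteq> 0" by simp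
  ultimately show ?thesis by (metis mult_cancel_right2)
qed

lemma inverse_eq_power_card_UNIV_minus_2:
  fixes x :: "'a::{finite,field}"
  assumes "x \<noteq> 0" shows "inverse x = x ^ (card (UNIV :: 'a set) - 2)"
proof -
  have "card {0, 1::'a} \<le> card (UNIV :: 'a set)" by (rule card_mono) auto
  then have "Suc (card (UNIV :: 'a set) - 2) = card (UNIV :: 'a set) - 1" by simp
  then have "x * x ^ (card (UNIV :: 'a set) - 2) = x ^ (card (UNIV :: 'a set) - 1)"
    by (simp only: power_Suc[symmetric])
  then show ?thesis using assms power_card_UNIV_minus_1[OF assms] by (simp add: field_simps)
qed

lemma of_nat_card_UNIV: "of_nat (card (UNIV :: 'a::{finite,field} set)) = (0::'a)"
proof -
  have "(\<Sum>x\<in>(UNIV::'a set). x + 1) = (\<Sum>x\<in>UNIV. x)"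
    by (rule sum.reindex_bij_witness[of _ "\<lambda>y. y - 1" "\<lambda>y. y + 1"]) auto
  then show ?thesis by (simp add: sum.distrib)
qed

lemma is_subfield_if_ring_closed:
  fixes T :: "'a::{finite,field} set"
  assumes "0 \<in> T" "1 \<in> T" "\<And>x y. x \<in> T \<Longrightarrow> y \<in> T \<Longrightarrow> x + y \<in> T"
    and mult: "\<And>x y. x \<in> T \<Longrightarrow> y \<in> T \<Longrightarrow> x * y \<in> T" and "\<And>x. x \<in> T \<Longrightarrow> - x \<in> T"
  shows "is_subfield T"
proof -
  have power: "x ^ s \<in> T" if "x \<in> T" for x s
    using that by (induction s) (simp_all add: assms(2) mult)
  have "inverse x \<in> T" if "x \<in> T" "x \<noteq> 0" for x
    using power[OF that(1)] that(2) by (simp add: inverse_eq_power_card_UNIV_minus_2)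
  with assms show ?thesis by (simp add: is_subfield_def)
qed

lemma minus_power_CHAR_power:
  assumes "prime (CHAR('a::comm_ring_1))"
  shows "(- x :: 'a) ^ (CHAR('a) ^ e) = - (x ^ (CHAR('a) ^ e))"
proof (induction e)
  case (Suc e)
  have "(- x) ^ (CHAR('a) ^ Suc e) = ((- x) ^ (CHAR('a) ^ e)) ^ CHAR('a)"
    by (simp add: power_mult[symmetric] mult.commute)
  also have "\<dots> = - ((x ^ (CHAR('a) ^ e)) ^ CHAR('a))"
    using Suc assms by (simp add: minus_power_prime_CHAR)
  also have "\<dots> = - (x ^ (CHAR('a) ^ Suc e))"
    by (simp add: power_mult[symmetric] mult.commute)
  finally show ?case .
qed simp

lemma diff_1_dvd_power_diff_1: "1 \<le> (x::nat) \<Longrightarrow> (x - 1) dvd (x ^ t - 1)"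
proof (induction t)
  case (Suc t)
  have "1 \<le> x ^ t" using Suc.prems by simp
  then have "x ^ Suc t - 1 = x * (x ^ t - 1) + (x - 1)"
    using Suc.prems by (simp add: algebra_simps diff_mult_distrib2)
  moreover have "x - 1 dvd x * (x ^ t - 1) + (x - 1)" using Suc by (intro dvd_add dvd_mult) auto
  ultimately show ?case by simp
qed simp

text \<open>The bound on \<open>n\<close> excludes the field with two elements, where \<open>\<alpha> = 0\<close> would also
  satisfy the primitivity hypothesis.\<close>

locale galois_field =
  fixes q n :: nat and \<alpha> :: "'a::{finite,field}"
  assumes q_prime_power: "\<exists>p r. prime p \<and> 0 < r \<and> q = p ^ r"
    and card_UNIV: "card (UNIV :: 'a set) = q ^ n"
    and primitive: "\<forall>x::'a. x \<noteq> 0 \<longrightarrow> (\<exists>j::nat. x = \<alpha> ^ j)"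
    and n_ge_2: "2 \<le> n"
begin

lemma q_ge_2: "2 \<le> q"
proof -
  obtain p r where "prime p" "0 < r" "q = p ^ r" using q_prime_power by blast
  then show ?thesis
    using prime_ge_2_nat[of p] power_increasing[of 1 r p] by auto
qed

lemma q_power_ge_2: "1 \<le> m \<Longrightarrow> 2 \<le> q ^ m"
  using q_ge_2 power_increasing[of 1 m q] by auto

lemma q_power_n_ge_4: "4 \<le> q ^ n"
proof -
  have "2 ^ 2 \<le> q ^ 2" using q_ge_2 by (rule power_mono) simp
  also have "q ^ 2 \<le> q ^ n" using q_ge_2 n_ge_2 by (intro power_increasing) auto
  finally show ?thesis by simp
qed

lemma power_q_n_minus_1: "x \<noteq> 0 \<Longrightarrow> x ^ (q ^ n - 1) = (1::'a)"
  using power_card_UNIV_minus_1[of x] card_UNIV by simp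

lemma CHAR_eq: obtains p r where "prime p" "0 < r" "q = p ^ r" "CHAR('a) = p"
proof -
  obtain p r where pr: "prime p" "0 < r" "q = p ^ r" using q_prime_power by blast
  have prime_CHAR: "prime CHAR('a)"
    using prime_CHAR_semidom finite_imp_CHAR_pos[where 'a='a] by auto
  have "of_nat (p ^ (r * n)) = (0::'a)"
    using of_nat_card_UNIV[where 'a='a] card_UNIV pr(3) by (simp add: power_mult)
  then have "CHAR('a) dvd p ^ (r * n)" by (simp only: of_nat_eq_0_iff_char_dvd)
  then have "CHAR('a) = p"
    using prime_dvd_power[OF prime_CHAR] prime_CHAR pr(1) by (auto simp: primes_dvd_imp_eq)
  then show ?thesis using that pr by blast
qed

lemma power_q_power_add: "(x + y :: 'a) ^ (q ^ m) = x ^ (q ^ m) + y ^ (q ^ m)"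
proof -
  obtain p r where "prime p" "0 < r" "q = p ^ r" "CHAR('a) = p" by (rule CHAR_eq)
  then show ?thesis by (intro freshmans_dream'[where n = "r * m"]) (auto simp: power_mult)
qed

lemma power_q_power_minus: "(- x :: 'a) ^ (q ^ m) = - (x ^ (q ^ m))"
proof -
  obtain p r where "prime p" "0 < r" "q = p ^ r" "CHAR('a) = p" by (rule CHAR_eq)
  then show ?thesis using minus_power_CHAR_power[of x "r * m"] by (simp add: power_mult)
qed

lemma is_subfield_subfield: "is_subfield (subfield q m :: 'a set)"
  unfolding is_subfield_def subfield_def
  using q_ge_2 by (simp add: power_q_power_add power_q_power_minus power_mult_distrib power_inverse)

lemma subfield_mono: assumes "m dvd m'" shows "subfield q m \<subseteq> (subfield q m' :: 'a set)"
proof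
  fix x :: 'a assume x: "x \<in> subfield q m"
  obtain t where t: "m' = m * t" using assms by blast
  have "x ^ (q ^ (m * t)) = x"
  proof (induction t)
    case (Suc t)
    have "x ^ (q ^ (m * Suc t)) = (x ^ (q ^ (m * t))) ^ (q ^ m)"
      by (simp add: power_mult[symmetric] power_add mult.commute)
    then show ?case using Suc x by (simp add: subfield_def)
  qed simp
  then show "x \<in> subfield q m'" using t by (simp add: subfield_def)
qed

lemma alpha_nonzero: "\<alpha> \<noteq> 0"
proof
  assume "\<alpha> = 0"
  have "UNIV - {0} \<subseteq> {1::'a}"
  proof
    fix x :: 'a assume "x \<in> UNIV - {0}"
    then obtain j where "x = \<alpha> ^ j" "x \<noteq> 0" using primitive by blast
    then show "x \<in> {1}" using \<open>\<alpha> = 0\<close> by (cases j) auto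
  qed
  then have "card (UNIV - {0::'a}) \<le> card {1::'a}" by (intro card_mono) auto
  then show False using card_UNIV q_power_n_ge_4 by (simp add: card_Diff_singleton)
qed

text \<open>The order of \<open>\<alpha>\<close> is \<open>q ^ n - 1\<close>: its powers below the order already exhaust the
  \<open>q ^ n - 1\<close> nonzero elements.\<close>

lemma alpha_power_eq_1_iff: "\<alpha> ^ s = 1 \<longleftrightarrow> (q ^ n - 1) dvd s"
proof
  assume "(q ^ n - 1) dvd s"
  then show "\<alpha> ^ s = 1" using power_q_n_minus_1[OF alpha_nonzero] by (auto simp: power_mult)
next
  assume s: "\<alpha> ^ s = 1"
  define d where "d = (LEAST d. 0 < d \<and> \<alpha> ^ d = 1)"
  have N: "0 < q ^ n - 1" using q_power_n_ge_4 by simp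
  then have "\<exists>d. 0 < d \<and> \<alpha> ^ d = 1" using power_q_n_minus_1[OF alpha_nonzero] by blast
  then have "0 < d \<and> \<alpha> ^ d = 1" unfolding d_def by (rule LeastI_ex)
  then have d: "0 < d" "\<alpha> ^ d = 1" by auto
  have d_min: "d \<le> e" if "0 < e" "\<alpha> ^ e = 1" for e
    unfolding d_def by (rule Least_le) (use that in auto)
  have power_mod: "\<alpha> ^ j = \<alpha> ^ (j mod d)" for j
  proof -
    have "\<alpha> ^ j = \<alpha> ^ (d * (j div d) + j mod d)" by simp
    also have "\<dots> = \<alpha> ^ (j mod d)" by (simp only: power_add power_mult d(2)) simp
    finally show ?thesis .
  qed
  have "UNIV - {0} \<subseteq> (\<lambda>j. \<alpha> ^ j) ` {..<d}"
  proof
    fix x :: 'a assume "x \<in> UNIV - {0}"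
    then obtain j where "x = \<alpha> ^ j" using primitive by blast
    moreover have "j mod d < d" using d(1) by simp
    ultimately show "x \<in> (\<lambda>j. \<alpha> ^ j) ` {..<d}" using power_mod[of j] by blast
  qed
  then have "card (UNIV - {0::'a}) \<le> card ((\<lambda>j. \<alpha> ^ j) ` {..<d})" by (intro card_mono) auto
  also have "\<dots> \<le> d" using card_image_le[of "{..<d}"] by simp
  finally have "q ^ n - 1 \<le> d" using card_UNIV by (simp add: card_Diff_singleton)
  then have "d = q ^ n - 1" using d_min[OF N power_q_n_minus_1[OF alpha_nonzero]] by simp
  moreover have "s mod d = 0"
    using d_min[of "s mod d"] s power_mod[of s] mod_less_divisor[OF d(1), of s]
    by (cases "s mod d = 0") auto
  ultimately show "(q ^ n - 1) dvd s" by auto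
qed

lemma alpha_power_eq_iff: "\<alpha> ^ a = \<alpha> ^ b \<longleftrightarrow> a mod (q ^ n - 1) = b mod (q ^ n - 1)"
proof -
  have *: "\<alpha> ^ a = \<alpha> ^ b \<longleftrightarrow> a mod (q ^ n - 1) = b mod (q ^ n - 1)" if "a \<le> b" for a b
  proof -
    have "\<alpha> ^ b = \<alpha> ^ a * \<alpha> ^ (b - a)" using that by (simp flip: power_add)
    then have "\<alpha> ^ a = \<alpha> ^ b \<longleftrightarrow> \<alpha> ^ (b - a) = 1" using alpha_nonzero by auto
    also have "\<dots> \<longleftrightarrow> (q ^ n - 1) dvd (b - a)" by (rule alpha_power_eq_1_iff)
    also have "\<dots> \<longleftrightarrow> a mod (q ^ n - 1) = b mod (q ^ n - 1)"
      using that by (metis mod_eq_dvd_iff_nat)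
    finally show ?thesis .
  qed
  show ?thesis using *[of a b] *[of b a] by (cases "a \<le> b") auto
qed

lemma inj_on_alpha_power: "inj_on (\<lambda>j. \<alpha> ^ j) {..<q ^ n - 1}"
  by (rule inj_onI) (simp add: alpha_power_eq_iff)

lemma q_power_minus_1_cofactor:
  assumes "m dvd n" "1 \<le> m"
  shows "(q ^ m - 1) * ((q ^ n - 1) div (q ^ m - 1)) = q ^ n - 1"
    and "0 < (q ^ n - 1) div (q ^ m - 1)"
proof -
  obtain t where "n = m * t" using assms(1) by blast
  then have "(q ^ m - 1) dvd (q ^ n - 1)"
    using q_power_ge_2[OF assms(2)] diff_1_dvd_power_diff_1[of "q ^ m" t] by (simp add: power_mult)
  then show eq: "(q ^ m - 1) * ((q ^ n - 1) div (q ^ m - 1)) = q ^ n - 1" by simp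
  show "0 < (q ^ n - 1) div (q ^ m - 1)"
    using eq q_power_n_ge_4 by (cases "(q ^ n - 1) div (q ^ m - 1) = 0") auto
qed

lemma alpha_i_power: "alpha_i q n \<alpha> m ^ t = \<alpha> ^ (((q ^ n - 1) div (q ^ m - 1)) * t)"
  by (simp add: alpha_i_def power_mult)

lemma inj_on_alpha_i_power:
  assumes "m dvd n" "1 \<le> m"
  shows "inj_on (\<lambda>t. alpha_i q n \<alpha> m ^ t) {..<q ^ m - 1}"
proof (rule inj_onI)
  define N where "N = (q ^ n - 1) div (q ^ m - 1)"
  note N = q_power_minus_1_cofactor[OF assms, folded N_def]
  fix a b assume "a \<in> {..<q ^ m - 1}" "b \<in> {..<q ^ m - 1}"
    "alpha_i q n \<alpha> m ^ a = alpha_i q n \<alpha> m ^ b"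
  moreover have "N * a < q ^ n - 1" if "a < q ^ m - 1" for a
  proof -
    have "N * a < N * (q ^ m - 1)" using that N(2) by (intro mult_strict_left_mono)
    also have "\<dots> = q ^ n - 1" using N(1) by (simp add: mult.commute)
    finally show ?thesis .
  qed
  ultimately have "N * a = N * b"
    using inj_on_alpha_power by (auto simp: alpha_i_power N_def dest: inj_onD)
  then show "a = b" using N(2) by simp
qed

lemma alpha_i_power_in_subfield:
  assumes "m dvd n" "1 \<le> m" shows "alpha_i q n \<alpha> m ^ t \<in> subfield q m"
proof -
  have "(alpha_i q n \<alpha> m ^ t) ^ (q ^ m - 1) = \<alpha> ^ ((q ^ n - 1) * t)"
    using q_power_minus_1_cofactor(1)[OF assms]
    by (simp add: alpha_i_power power_mult[symmetric] mult_ac)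
  also have "\<dots> = 1" by (simp add: alpha_power_eq_1_iff)
  finally have "(alpha_i q n \<alpha> m ^ t) ^ (q ^ m - 1) = 1" .
  then have "(alpha_i q n \<alpha> m ^ t) ^ Suc (q ^ m - 1) = alpha_i q n \<alpha> m ^ t" by simp
  moreover have "Suc (q ^ m - 1) = q ^ m" using q_power_ge_2[OF assms(2)] by simp
  ultimately show ?thesis by (simp add: subfield_def del: power_Suc)
qed

lemma subfield_minus_0_eq:
  assumes "m dvd n" "1 \<le> m"
  shows "subfield q m - {0} = (\<lambda>t. alpha_i q n \<alpha> m ^ t) ` {..<q ^ m - 1}"
proof
  show "(\<lambda>t. alpha_i q n \<alpha> m ^ t) ` {..<q ^ m - 1} \<subseteq> subfield q m - {0}"
    using alpha_i_power_in_subfield[OF assms] alpha_nonzero by (auto simp: alpha_i_power)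
next
  define N where "N = (q ^ n - 1) div (q ^ m - 1)"
  define Q where "Q = q ^ m"
  note N = q_power_minus_1_cofactor[OF assms, folded N_def Q_def]
  have Q: "2 \<le> Q" unfolding Q_def by (rule q_power_ge_2[OF assms(2)])
  show "subfield q m - {0} \<subseteq> (\<lambda>t. alpha_i q n \<alpha> m ^ t) ` {..<q ^ m - 1}"
  proof
    fix x :: 'a assume x: "x \<in> subfield q m - {0}"
    have "Suc (Q - 1) = Q" using Q by simp
    then have "x ^ Suc (Q - 1) = x" using x by (simp add: subfield_def Q_def del: power_Suc)
    then have x1: "x ^ (Q - 1) = 1" using x by simp
    obtain j where j: "x = \<alpha> ^ j" using primitive x by blast
    then have "\<alpha> ^ (j * (Q - 1)) = 1" using x1 by (simp add: power_mult)
    then have "(Q - 1) * N dvd j * (Q - 1)" using alpha_power_eq_1_iff N(1) by simp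
    then have "N dvd j" using Q by (simp add: mult.commute)
    then obtain l where l: "j = N * l" by blast
    have "(N * l) mod ((Q - 1) * N) = (N * (l mod (Q - 1))) mod ((Q - 1) * N)"
      by (simp add: mult.commute[of "Q - 1" N] mod_mult_mult1)
    then have "\<alpha> ^ (N * l) = \<alpha> ^ (N * (l mod (Q - 1)))"
      by (simp only: alpha_power_eq_iff N(1)[symmetric])
    then have "x = alpha_i q n \<alpha> m ^ (l mod (Q - 1))"
      using j l by (simp add: alpha_i_power N_def Q_def)
    moreover have "l mod (Q - 1) < Q - 1" using Q by simp
    ultimately show "x \<in> (\<lambda>t. alpha_i q n \<alpha> m ^ t) ` {..<q ^ m - 1}" by (auto simp: Q_def)
  qed
qed

lemma card_subfield:
  assumes "m dvd n" "1 \<le> m" shows "card (subfield q m :: 'a set) = q ^ m"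
proof -
  have "card (subfield q m - {0::'a}) = q ^ m - 1"
    using subfield_minus_0_eq[OF assms] inj_on_alpha_i_power[OF assms] by (simp add: card_image)
  moreover have "(0::'a) \<in> subfield q m" using is_subfield_subfield by (simp add: is_subfield_def)
  ultimately show ?thesis using q_power_ge_2[OF assms(2)] by (simp add: card_Diff_singleton)
qed

end

section \<open>Powers of a field element\<close>

lemma powers_in_lin_span:
  fixes a :: "'a::{finite,field}" and K :: "'a set" and j :: nat
  defines "S \<equiv> lin_span K ((\<lambda>t. a ^ t) ` {..<j})"
  assumes K: "is_subfield K" and a_j: "a ^ j \<in> S"
  shows "a ^ N \<in> S"
proof -
  have S: "is_subspace K S" unfolding S_def by (rule is_subspace_lin_span[OF K])
  have lower: "a ^ t \<in> S" if "t < j" for t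
    using lin_span_superset[OF K, of "(\<lambda>t. a ^ t) ` {..<j}"] that unfolding S_def by auto
  have shift: "a * x \<in> S" if "x \<in> S" for x
  proof (rule lin_span_mult_closed[OF S])
    show "x \<in> lin_span K ((\<lambda>t. a ^ t) ` {..<j})" using that by (simp add: S_def)
    have "a ^ Suc t \<in> S" if "t < j" for t
      using lower[of "Suc t"] a_j that by (cases "Suc t = j") auto
    then show "\<forall>v\<in>(\<lambda>t. a ^ t) ` {..<j}. a * v \<in> S" by auto
  qed
  show ?thesis
  proof (cases "N < j")
    case False
    have "a ^ (j + u) \<in> S" for u by (induction u) (use a_j shift in auto)
    then show ?thesis using False by (metis le_add_diff_inverse not_less)
  qed (rule lower)
qed

lemma power_in_lin_span_if_dependent:
  fixes a :: "'a::{finite,field}"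
  assumes K: "is_subfield K" and e: "\<forall>t<Suc j. e t \<in> K" "e j \<noteq> 0"
    and dep: "(\<Sum>t<Suc j. e t * a ^ t) = 0"
  shows "a ^ j \<in> lin_span K ((\<lambda>t. a ^ t) ` {..<j})"
proof -
  define S where "S = lin_span K ((\<lambda>t. a ^ t) ` {..<j})"
  have S: "is_subspace K S" unfolding S_def by (rule is_subspace_lin_span[OF K])
  have "a ^ t \<in> S" if "t < j" for t
    using lin_span_superset[OF K, of "(\<lambda>t. a ^ t) ` {..<j}"] that unfolding S_def by auto
  moreover have "e t \<in> K" if "t < j" for t using e(1) that by simp
  ultimately have "e t * a ^ t \<in> S" if "t < j" for t
    using S that unfolding is_subspace_def by blast
  then have "(\<Sum>t<j. e t * a ^ t) \<in> S" by (intro is_subspace_sum_closed[OF S]) simp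
  moreover have "- inverse (e j) \<in> K" using K e unfolding is_subfield_def by auto
  ultimately have "(- inverse (e j)) * (\<Sum>t<j. e t * a ^ t) \<in> S"
    using S unfolding is_subspace_def by blast
  moreover have "a ^ j = (- inverse (e j)) * (\<Sum>t<j. e t * a ^ t)"
    using dep e(2) by (simp add: field_simps eq_neg_iff_add_eq_0)
  ultimately show ?thesis by (simp add: S_def)
qed

text \<open>If \<open>1, a, \<dots>, a ^ (j - 1)\<close> were dependent, their span would contain every power
  of \<open>a\<close>; but it has at most \<open>card K ^ j\<close> elements.\<close>

lemma powers_lin_indep:
  fixes a :: "'a::{finite,field}"
  assumes K: "is_subfield K" and inj: "inj_on (\<lambda>t. a ^ t) {..<P}"
  shows "card K ^ j < P \<Longrightarrow> \<forall>t<j. e t \<in> K \<Longrightarrow> (\<Sum>t<j. e t * a ^ t) = 0 \<Longrightarrow> \<forall>t<j. e t = 0"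
proof (induction j)
  case (Suc j)
  have K_pos: "1 \<le> card K" using card_ge_2_if_is_subfield[OF K] by simp
  have "card K ^ j \<le> card K ^ Suc j" using K_pos by (intro power_increasing) auto
  show ?case
  proof (cases "e j = 0")
    case True
    have "card K ^ j < P" using \<open>card K ^ j \<le> _\<close> Suc.prems(1) by linarith
    moreover have "\<forall>t<j. e t \<in> K" using Suc.prems(2) by simp
    moreover have "(\<Sum>t<j. e t * a ^ t) = 0" using Suc.prems(3) True by simp
    ultimately have "\<forall>t<j. e t = 0" by (rule Suc.IH)
    then show ?thesis using True by (simp add: less_Suc_eq)
  next
    case False
    define S where "S = lin_span K ((\<lambda>t. a ^ t) ` {..<j})"
    have "a ^ j \<in> S"
      unfolding S_def using power_in_lin_span_if_dependent[OF K Suc.prems(2) False Suc.prems(3)] .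
    then have "(\<lambda>t. a ^ t) ` {..<P} \<subseteq> S"
      using powers_in_lin_span[OF K, of a j] unfolding S_def by auto
    then have "card ((\<lambda>t. a ^ t) ` {..<P}) \<le> card S" by (intro card_mono) simp_all
    then have "P \<le> card S" using card_image[OF inj] by simp
    also have "\<dots> \<le> card K ^ card ((\<lambda>t. a ^ t) ` {..<j})" unfolding S_def by (rule card_lin_span_le)
    also have "\<dots> \<le> card K ^ j"
      using K_pos card_image_le[of "{..<j}" "\<lambda>t. a ^ t"] by (intro power_increasing) auto
    finally show ?thesis using \<open>card K ^ j \<le> _\<close> Suc.prems(1) by simp
  qed
qed simp

section \<open>Scaled subspaces\<close>

definition scale_set :: "'a::field \<Rightarrow> 'a set \<Rightarrow> 'a set" where
  "scale_set c U = (\<lambda>x. x * c) ` U"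

lemma is_subspace_scale_set:
  assumes "is_subspace R U" shows "is_subspace R (scale_set c U)"
  unfolding is_subspace_def
proof (intro conjI ballI)
  show "0 \<in> scale_set c U" using assms unfolding scale_set_def is_subspace_def by force
next
  fix x y assume "x \<in> scale_set c U" "y \<in> scale_set c U"
  then obtain u v where "u \<in> U" "v \<in> U" "x = u * c" "y = v * c" unfolding scale_set_def by blast
  moreover from this have "u + v \<in> U" using assms unfolding is_subspace_def by blast
  moreover have "x + y = (u + v) * c" using \<open>x = u * c\<close> \<open>y = v * c\<close> by (simp add: distrib_right)
  ultimately show "x + y \<in> scale_set c U" unfolding scale_set_def by blast
next
  fix r x assume "r \<in> R" "x \<in> scale_set c U"
  then obtain u where "u \<in> U" "x = u * c" unfolding scale_set_def by blast
  moreover from this have "r * u \<in> U" using assms \<open>r \<in> R\<close> unfolding is_subspace_def by blast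
  ultimately show "r * x \<in> scale_set c U" unfolding scale_set_def by (auto simp: mult.assoc)
qed

lemma inj_mult_right: "c \<noteq> 0 \<Longrightarrow> inj (\<lambda>x::'a::field. x * c)"
  by (rule injI) simp

lemma card_scale_set: "c \<noteq> 0 \<Longrightarrow> card (scale_set c U) = card U"
  unfolding scale_set_def by (rule card_image) (auto intro: inj_on_subset[OF inj_mult_right])

lemma scale_set_subspace_sum:
  "scale_set c (subspace_sum U V) = subspace_sum (scale_set c U) (scale_set c V)"
proof (intro equalityI subsetI)
  fix x assume "x \<in> scale_set c (subspace_sum U V)"
  then obtain u v where "u \<in> U" "v \<in> V" "x = (u + v) * c"
    unfolding scale_set_def subspace_sum_def by blast
  moreover from this have "u * c \<in> scale_set c U" "v * c \<in> scale_set c V"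
    unfolding scale_set_def by auto
  ultimately show "x \<in> subspace_sum (scale_set c U) (scale_set c V)"
    unfolding subspace_sum_def by (auto simp: distrib_right)
next
  fix x assume "x \<in> subspace_sum (scale_set c U) (scale_set c V)"
  then obtain u v where "u \<in> U" "v \<in> V" "x = u * c + v * c"
    unfolding scale_set_def subspace_sum_def by blast
  moreover from this have "u + v \<in> subspace_sum U V" unfolding subspace_sum_def by blast
  moreover have "x = (u + v) * c" using \<open>x = u * c + v * c\<close> by (simp add: distrib_right)
  ultimately show "x \<in> scale_set c (subspace_sum U V)" unfolding scale_set_def by blast
qed

lemma scale_set_Int: "c \<noteq> 0 \<Longrightarrow> scale_set c (U \<inter> V) = scale_set c U \<inter> scale_set c V"
  unfolding scale_set_def by (rule image_Int[OF inj_mult_right])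

lemma scale_set_scale_set: "scale_set c (scale_set d U) = scale_set (d * c) U"
  unfolding scale_set_def by (auto simp: image_image mult.assoc)

lemma scale_set_1: "scale_set 1 U = U"
  unfolding scale_set_def by simp

lemma scale_set_psubset: "c \<noteq> 0 \<Longrightarrow> U \<subset> V \<Longrightarrow> scale_set c U \<subset> scale_set c V"
  unfolding scale_set_def psubset_eq using inj_image_subset_iff[OF inj_mult_right[of c]] by blast

lemma Int_scale_set_eq_zero:
  assumes K: "is_subfield K" and "V \<subseteq> K" "0 \<in> V" "\<gamma> \<notin> K"
  shows "V \<inter> scale_set \<gamma> V = {0}"
proof (intro equalityI subsetI)
  fix z assume z: "z \<in> V \<inter> scale_set \<gamma> V"
  then obtain w where w: "w \<in> V" "z = w * \<gamma>" unfolding scale_set_def by blast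
  show "z \<in> {0}"
  proof (rule ccontr)
    assume "z \<notin> {0}"
    then have "w \<noteq> 0" "z * inverse w = \<gamma>" using w by auto
    moreover have "z * inverse w \<in> K"
      using z w \<open>w \<noteq> 0\<close> \<open>V \<subseteq> K\<close> K unfolding is_subfield_def by blast
    ultimately show False using \<open>\<gamma> \<notin> K\<close> by simp
  qed
qed (use \<open>0 \<in> V\<close> in \<open>auto simp: scale_set_def\<close>)

section \<open>Dimension over the field with \<open>q\<close> elements\<close>

lemma Fq_subspace_iff: "Fq_subspace q V \<longleftrightarrow> is_subspace (subfield q 1) V"
  by (simp add: Fq_subspace_def is_subspace_def)

lemma Fq_span_eq_lin_span:
  fixes S :: "'a::{finite,field} set"
  assumes "is_subfield (subfield q 1 :: 'a set)"
  shows "Fq_span q S = lin_span (subfield q 1) S"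
proof
  show "lin_span (subfield q 1) S \<subseteq> Fq_span q S"
  proof
    fix x assume "x \<in> lin_span (subfield q 1) S"
    then obtain c where "x = (\<Sum>v\<in>S. c v * v)" "\<forall>v\<in>S. c v \<in> subfield q 1"
      unfolding lin_span_def by blast
    then show "x \<in> Fq_span q S"
      unfolding Fq_span_def by (intro CollectI exI[of _ S] exI[of _ c]) auto
  qed
next
  show "Fq_span q S \<subseteq> lin_span (subfield q 1) S"
  proof
    fix x assume "x \<in> Fq_span q S"
    then obtain T c where T: "T \<subseteq> S" "\<forall>v\<in>T. c v \<in> subfield q 1" "x = (\<Sum>v\<in>T. c v * v)"
      unfolding Fq_span_def by blast
    define c' where "c' v = (if v \<in> T then c v else 0)" for v
    have "(\<Sum>v\<in>S. c' v * v) = (\<Sum>v\<in>T. c' v * v)"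
      by (rule sum.mono_neutral_right) (use T in \<open>auto simp: c'_def\<close>)
    also have "\<dots> = x" unfolding T(3) by (rule sum.cong) (auto simp: c'_def)
    finally show "x \<in> lin_span (subfield q 1) S"
      using T(2) assms by (intro lin_spanI[of S c']) (auto simp: c'_def is_subfield_def)
  qed
qed

context galois_field
begin

lemma card_subfield_1: "card (subfield q 1 :: 'a set) = q"
  using card_subfield[of 1] by simp

lemma Fq_dim_eq:
  assumes V: "Fq_subspace q (V :: 'a set)" and card_V: "card V = q ^ d"
  shows "Fq_dim q V = d"
  unfolding Fq_dim_def
proof (rule Least_equality)
  have F: "is_subfield (subfield q 1 :: 'a set)" by (rule is_subfield_subfield)
  obtain B where B: "B \<subseteq> V" "lin_span (subfield q 1) B = V" "card V = q ^ card B"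
    using subspace_has_basis[OF F V[unfolded Fq_subspace_iff]] card_subfield_1 by auto
  have "card B = d" using B(3) card_V q_ge_2 by (simp add: power_inject_exp)
  then show "\<exists>S. S \<subseteq> V \<and> finite S \<and> card S = d \<and> Fq_span q S = V"
    using B Fq_span_eq_lin_span[OF F] by auto
next
  fix d' assume "\<exists>S. S \<subseteq> V \<and> finite S \<and> card S = d' \<and> Fq_span q S = V"
  then obtain S where S: "card S = d'" "Fq_span q S = V" by blast
  have "q ^ d \<le> q ^ d'"
    using card_V card_lin_span_le[of "subfield q 1" S] S card_subfield_1
      Fq_span_eq_lin_span[OF is_subfield_subfield] by simp
  then show "d \<le> d'" using q_ge_2 by (simp add: power_le_imp_le_exp)
qed

lemma card_Fq_subspace: "Fq_subspace q (V :: 'a set) \<Longrightarrow> card V = q ^ Fq_dim q V"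
  using card_subspace_eq_power[OF is_subfield_subfield, of 1 V] Fq_dim_eq card_subfield_1
  by (auto simp: Fq_subspace_iff)

lemma Fq_dim_scale_set:
  assumes "c \<noteq> 0" "Fq_subspace q (V :: 'a set)"
  shows "Fq_dim q (scale_set c V) = Fq_dim q V"
  using assms card_Fq_subspace[OF assms(2)] card_scale_set[OF assms(1)]
  by (intro Fq_dim_eq) (auto simp: Fq_subspace_iff intro: is_subspace_scale_set)

lemma subspace_dist_scale_set:
  assumes "c \<noteq> 0" "Fq_subspace q (U :: 'a set)" "Fq_subspace q W"
  shows "subspace_dist q (scale_set c U) (scale_set c W) = subspace_dist q U W"
  using assms
  by (simp add: subspace_dist_def scale_set_subspace_sum[symmetric] scale_set_Int[symmetric]
      Fq_dim_scale_set Fq_subspace_iff is_subspace_subspace_sum is_subspace_Int)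

lemma subspace_dist_of_card:
  assumes "Fq_subspace q (U :: 'a set)" "Fq_subspace q W"
    and "card (subspace_sum U W) = q ^ s" "card (U \<inter> W) = q ^ t"
  shows "subspace_dist q U W = s - t"
  using assms
  by (simp add: subspace_dist_def Fq_dim_eq Fq_subspace_iff is_subspace_subspace_sum
      is_subspace_Int)

lemma subspace_dist_scale_set_of_subset_subfield:
  assumes W: "Fq_subspace q (W :: 'a set)" "card W = q ^ t"
    and K: "is_subfield K" "W \<subseteq> K" and \<gamma>: "\<gamma> \<notin> K"
  shows "subspace_dist q W (scale_set \<gamma> W) = 2 * t"
proof -
  have "0 \<in> K" using K(1) by (simp add: is_subfield_def)
  then have "\<gamma> \<noteq> 0" using \<gamma> by auto
  have F: "is_subfield (subfield q 1 :: 'a set)" by (rule is_subfield_subfield)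
  have W': "is_subspace (subfield q 1) W" "is_subspace (subfield q 1) (scale_set \<gamma> W)"
    using W(1) by (simp_all add: Fq_subspace_iff is_subspace_scale_set)
  have "W \<inter> scale_set \<gamma> W = {0}"
    using W'(1) K \<gamma> by (intro Int_scale_set_eq_zero) (auto simp: is_subspace_def)
  moreover have "card (subspace_sum W (scale_set \<gamma> W)) * card (W \<inter> scale_set \<gamma> W) = q ^ t * q ^ t"
    using card_subspace_sum_mult_card_Int[OF F W'] W(2) card_scale_set[OF \<open>\<gamma> \<noteq> 0\<close>] by simp
  ultimately have "card (subspace_sum W (scale_set \<gamma> W)) = q ^ (2 * t)"
    "card (W \<inter> scale_set \<gamma> W) = 1"
    by (simp_all add: mult_2 power_add)
  then show ?thesis using subspace_dist_of_card[of W "scale_set \<gamma> W" "2 * t" 0] W'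
    by (simp add: Fq_subspace_iff)
qed

end

section \<open>Weaved subspaces\<close>

lemma weave_subI:
  "\<forall>t<j. c t \<in> subfield q (m i) \<Longrightarrow> x = (\<Sum>t<j. c t * alpha_i q n \<alpha> (m (Suc i)) ^ t)
   \<Longrightarrow> x \<in> weave_sub q n \<alpha> m i j"
  unfolding weave_sub_def by blast

context galois_field
begin

lemma is_subspace_weave_sub: "is_subspace (subfield q (m i)) (weave_sub q n \<alpha> m i j :: 'a set)"
proof -
  let ?K = "subfield q (m i) :: 'a set"
  let ?a = "alpha_i q n \<alpha> (m (Suc i))"
  have K: "is_subfield ?K" by (rule is_subfield_subfield)
  have "0 \<in> weave_sub q n \<alpha> m i j"
    using K by (intro weave_subI[of j "\<lambda>_. 0"]) (auto simp: is_subfield_def)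
  moreover have "x + y \<in> weave_sub q n \<alpha> m i j"
    if xy: "x \<in> weave_sub q n \<alpha> m i j" "y \<in> weave_sub q n \<alpha> m i j" for x y
  proof -
    obtain c d where "x = (\<Sum>t<j. c t * ?a ^ t)" "\<forall>t<j. c t \<in> ?K"
        "y = (\<Sum>t<j. d t * ?a ^ t)" "\<forall>t<j. d t \<in> ?K"
      using xy unfolding weave_sub_def by blast
    then show ?thesis
      using K by (intro weave_subI[of j "\<lambda>t. c t + d t"])
        (auto simp: is_subfield_def sum.distrib distrib_right)
  qed
  moreover have "r * x \<in> weave_sub q n \<alpha> m i j" if rx: "r \<in> ?K" "x \<in> weave_sub q n \<alpha> m i j" for r x
  proof -
    obtain c where "x = (\<Sum>t<j. c t * ?a ^ t)" "\<forall>t<j. c t \<in> ?K"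
      using rx(2) unfolding weave_sub_def by blast
    then show ?thesis
      using K rx(1) by (intro weave_subI[of j "\<lambda>t. r * c t"])
        (auto simp: is_subfield_def sum_distrib_left mult.assoc)
  qed
  ultimately show ?thesis unfolding is_subspace_def by blast
qed

lemma weave_sub_1: "weave_sub q n \<alpha> m i 1 = (subfield q (m i) :: 'a set)"
proof
  show "subfield q (m i) \<subseteq> weave_sub q n \<alpha> m i 1"
  proof
    fix x :: 'a assume "x \<in> subfield q (m i)"
    then show "x \<in> weave_sub q n \<alpha> m i 1" by (intro weave_subI[of 1 "\<lambda>_. x"]) auto
  qed
qed (auto simp: weave_sub_def)

lemma weave_sub_mono:
  assumes "j \<le> j'" shows "weave_sub q n \<alpha> m i j \<subseteq> (weave_sub q n \<alpha> m i j' :: 'a set)"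
proof
  let ?a = "alpha_i q n \<alpha> (m (Suc i))"
  fix x assume "x \<in> weave_sub q n \<alpha> m i j"
  then obtain c where c: "x = (\<Sum>t<j. c t * ?a ^ t)" "\<forall>t<j. c t \<in> subfield q (m i)"
    unfolding weave_sub_def by blast
  define c' where "c' t = (if t < j then c t else 0)" for t
  have "(\<Sum>t<j'. c' t * ?a ^ t) = (\<Sum>t<j. c' t * ?a ^ t)"
    by (rule sum.mono_neutral_right) (use assms in \<open>auto simp: c'_def\<close>)
  also have "\<dots> = x" unfolding c by (rule sum.cong) (auto simp: c'_def)
  finally show "x \<in> weave_sub q n \<alpha> m i j'"
    using c(2) is_subfield_subfield[of "m i"]
    by (intro weave_subI[of j' c']) (auto simp: c'_def is_subfield_def)
qed

lemma weave_sub_subset_subfield: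
  assumes "m i dvd m (Suc i)" "m (Suc i) dvd n" "1 \<le> m (Suc i)"
  shows "weave_sub q n \<alpha> m i j \<subseteq> (subfield q (m (Suc i)) :: 'a set)"
proof
  let ?L = "subfield q (m (Suc i)) :: 'a set"
  have L: "is_subfield ?L" by (rule is_subfield_subfield)
  fix x assume "x \<in> weave_sub q n \<alpha> m i j"
  then obtain c where c: "x = (\<Sum>t<j. c t * alpha_i q n \<alpha> (m (Suc i)) ^ t)"
    "\<forall>t<j. c t \<in> subfield q (m i)"
    unfolding weave_sub_def by blast
  have "c t * alpha_i q n \<alpha> (m (Suc i)) ^ t \<in> ?L" if "t < j" for t
    using c(2) that subfield_mono[OF assms(1)] alpha_i_power_in_subfield[OF assms(2,3)] L
    unfolding is_subfield_def by blast
  moreover have "is_subspace ?L ?L" using L by (auto simp: is_subfield_def is_subspace_def)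
  ultimately show "x \<in> ?L" unfolding c(1) by (intro is_subspace_sum_closed) auto
qed

lemma q_power_less_q_power_minus_1:
  assumes "a < b" "2 \<le> b" shows "q ^ a < q ^ b - 1"
proof -
  have "q ^ a \<le> q ^ (b - 1)" using assms(1) q_ge_2 by (intro power_increasing) auto
  moreover have "2 \<le> q ^ (b - 1)" using assms(2) by (intro q_power_ge_2) simp
  moreover have "q ^ b = q * q ^ (b - 1)" using assms(2) by (simp flip: power_Suc)
  moreover have "2 * q ^ (b - 1) \<le> q * q ^ (b - 1)" using q_ge_2 by (intro mult_le_mono1)
  ultimately show ?thesis by linarith
qed

lemma weave_sub_eq_image:
  "weave_sub q n \<alpha> m i j
     = (\<lambda>c. \<Sum>t<j. c t * alpha_i q n \<alpha> (m (Suc i)) ^ t) ` ({..<j} \<rightarrow>\<^sub>E subfield q (m i))"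
proof
  show "weave_sub q n \<alpha> m i j
      \<subseteq> (\<lambda>c. \<Sum>t<j. c t * alpha_i q n \<alpha> (m (Suc i)) ^ t) ` ({..<j} \<rightarrow>\<^sub>E subfield q (m i))"
  proof
    fix x assume "x \<in> weave_sub q n \<alpha> m i j"
    then obtain c where c: "x = (\<Sum>t<j. c t * alpha_i q n \<alpha> (m (Suc i)) ^ t)"
      "\<forall>t<j. c t \<in> subfield q (m i)"
      unfolding weave_sub_def by blast
    have "x = (\<Sum>t<j. restrict c {..<j} t * alpha_i q n \<alpha> (m (Suc i)) ^ t)"
      unfolding c(1) by (rule sum.cong) auto
    moreover have "restrict c {..<j} \<in> {..<j} \<rightarrow>\<^sub>E subfield q (m i)" using c(2) by auto
    ultimately show "x \<in> (\<lambda>c. \<Sum>t<j. c t * alpha_i q n \<alpha> (m (Suc i)) ^ t)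
      ` ({..<j} \<rightarrow>\<^sub>E subfield q (m i))"
      by blast
  qed
qed (auto intro!: weave_subI simp: PiE_iff)

text \<open>The coefficients are unique because \<open>1, a, \<dots>, a ^ (j - 1)\<close> are independent
  over \<open>subfield q (m i)\<close>, where \<open>a = alpha_i q n \<alpha> (m (Suc i))\<close> has order \<open>q ^ m (Suc i) - 1\<close>.\<close>

lemma card_weave_sub:
  assumes "m i dvd m (Suc i)" "m (Suc i) dvd n" "1 \<le> m i" "m i < m (Suc i)"
    and j: "j < m (Suc i) div m i"
  shows "card (weave_sub q n \<alpha> m i j :: 'a set) = q ^ (m i * j)"
proof -
  define K where "K = (subfield q (m i) :: 'a set)"
  define a where "a = alpha_i q n \<alpha> (m (Suc i))"
  have K: "is_subfield K" unfolding K_def by (rule is_subfield_subfield)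
  have card_K: "card K = q ^ m i"
    unfolding K_def using assms(1,2,3) by (intro card_subfield) (auto intro: dvd_trans)
  have inj: "inj_on (\<lambda>t. a ^ t) {..<q ^ m (Suc i) - 1}"
    unfolding a_def using assms by (intro inj_on_alpha_i_power) auto
  have "(j + 1) * m i \<le> (m (Suc i) div m i) * m i" using j by (intro mult_le_mono1) simp
  also have "\<dots> = m (Suc i)" using assms(1) by simp
  finally have "m i * j < m (Suc i)" using assms(3) by (simp add: algebra_simps)
  moreover have "2 \<le> m (Suc i)" using assms(3,4) by simp
  ultimately have "q ^ (m i * j) < q ^ m (Suc i) - 1" by (rule q_power_less_q_power_minus_1)
  then have small: "card K ^ j < q ^ m (Suc i) - 1" using card_K by (simp add: power_mult)
  have "inj_on (\<lambda>c. \<Sum>t<j. c t * a ^ t) ({..<j} \<rightarrow>\<^sub>E K)"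
  proof (rule inj_onI)
    fix c d assume cd: "c \<in> {..<j} \<rightarrow>\<^sub>E K" "d \<in> {..<j} \<rightarrow>\<^sub>E K"
      "(\<Sum>t<j. c t * a ^ t) = (\<Sum>t<j. d t * a ^ t)"
    then have sum0: "(\<Sum>t<j. (c t - d t) * a ^ t) = 0" by (simp add: left_diff_distrib sum_subtractf)
    have diff_K: "c t - d t \<in> K" if "t < j" for t
    proof -
      have "c t \<in> K" "d t \<in> K" using cd(1,2) that by auto
      then have "c t + - d t \<in> K" using K unfolding is_subfield_def by blast
      then show ?thesis by simp
    qed
    have "\<forall>t<j. c t - d t = 0"
      by (rule powers_lin_indep[OF K inj small]) (use diff_K sum0 in auto)
    then show "c = d" by (intro PiE_ext[OF cd(1,2)]) auto
  qed
  then have "card (weave_sub q n \<alpha> m i j) = card ({..<j} \<rightarrow>\<^sub>E K)"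
    unfolding weave_sub_eq_image K_def a_def by (simp add: card_image)
  also have "\<dots> = q ^ (m i * j)" by (simp add: card_PiE card_K power_mult)
  finally show ?thesis .
qed

end

section \<open>Two planes in a three-dimensional space\<close>

definition stabilizer :: "'a::field set \<Rightarrow> 'a set" where
  "stabilizer V = {z. \<forall>w\<in>V. z * w \<in> V}"

lemma subset_stabilizer: "is_subspace K V \<Longrightarrow> K \<subseteq> stabilizer V"
  unfolding stabilizer_def is_subspace_def by blast

lemma stabilizer_subset: "1 \<in> V \<Longrightarrow> stabilizer V \<subseteq> V"
  unfolding stabilizer_def by force

lemma is_subfield_stabilizer:
  fixes V :: "'a::{finite,field} set"
  assumes K: "is_subfield K" and V: "is_subspace K V"
  shows "is_subfield (stabilizer V)"
proof -
  have T_0: "0 \<in> stabilizer V" "1 \<in> stabilizer V"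
    using subset_stabilizer[OF V] K unfolding is_subfield_def by auto
  have T_add: "x + y \<in> stabilizer V" if "x \<in> stabilizer V" "y \<in> stabilizer V" for x y
    using that V unfolding stabilizer_def is_subspace_def by (simp add: distrib_right)
  have T_mult: "x * y \<in> stabilizer V" if "x \<in> stabilizer V" "y \<in> stabilizer V" for x y
    using that unfolding stabilizer_def by (simp add: mult.assoc)
  have "- 1 \<in> stabilizer V" using K subset_stabilizer[OF V] unfolding is_subfield_def by blast
  then have T_uminus: "- x \<in> stabilizer V" if "x \<in> stabilizer V" for x
    using T_mult[OF _ that, of "- 1"] by simp
  show ?thesis by (rule is_subfield_if_ring_closed[OF T_0 T_add T_mult T_uminus])
qed

text \<open>If \<open>\<gamma> V = V\<close>, the stabilizer of \<open>V\<close> would be a subfield strictly larger than \<open>K\<close> and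
  contained in \<open>V\<close>, hence of size \<open>card K ^ 2\<close>; but the whole field, of size \<open>card K ^ 3\<close>, is a
  vector space over it.\<close>

lemma scale_set_plane_ne:
  fixes V :: "'a::{finite,field} set"
  assumes K: "is_subfield K" and card_UNIV: "card (UNIV :: 'a set) = card K ^ 3"
    and V: "is_subspace K V" "card V = card K ^ 2" "1 \<in> V" and \<gamma>: "\<gamma> \<notin> K"
  shows "scale_set \<gamma> V \<noteq> V"
proof
  assume stable: "scale_set \<gamma> V = V"
  define T where "T = stabilizer V"
  have Q: "1 < card K" using card_ge_2_if_is_subfield[OF K] by simp
  have K_T: "K \<subseteq> T" unfolding T_def by (rule subset_stabilizer[OF V(1)])
  have T: "is_subfield T" unfolding T_def by (rule is_subfield_stabilizer[OF K V(1)])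
  have "\<gamma> * w \<in> V" if "w \<in> V" for w
    using stable that unfolding scale_set_def by (metis image_eqI mult.commute)
  then have "\<gamma> \<in> T - K" using \<gamma> unfolding T_def stabilizer_def by blast
  have "is_subspace K T" using T K_T unfolding is_subfield_def is_subspace_def by blast
  then obtain f where f: "card T = card K ^ f" using card_subspace_eq_power[OF K] by blast
  have "card K ^ f \<le> card K ^ 2"
    using card_mono[OF _ stabilizer_subset[OF V(3)]] f V(2) by (simp add: T_def)
  moreover have "2 \<le> f"
  proof (rule ccontr)
    assume "\<not> 2 \<le> f"
    then have "f = 0 \<or> f = 1" by linarith
    then have "card T \<le> card K" using f Q by auto
    then have "K = T" using K_T card_mono[of T K] by (intro card_subset_eq) auto
    then show False using \<open>\<gamma> \<in> T - K\<close> by simp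
  qed
  ultimately have "card T = card K ^ 2" using f Q by (simp add: power_increasing_iff)
  moreover have "is_subspace T (UNIV :: 'a set)" by (simp add: is_subspace_def)
  then obtain e where "card (UNIV :: 'a set) = card T ^ e" using card_subspace_eq_power[OF T]
    by blast
  ultimately have "card K ^ 3 = card K ^ (2 * e)" using card_UNIV by (simp add: power_mult)
  then have "3 = 2 * e" using Q by (simp add: power_inject_exp)
  then show False by presburger
qed

lemma planes_in_three_space:
  fixes U W :: "'a::{finite,field} set"
  assumes K: "is_subfield K" and card_UNIV: "card (UNIV :: 'a set) = card K ^ 3"
    and U: "is_subspace K U" "card U = card K ^ 2" and W: "is_subspace K W" "card W = card K ^ 2"
    and "U \<noteq> W"
  shows "card (subspace_sum U W) = card K ^ 3" "card (U \<inter> W) = card K"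
proof -
  have Q: "1 < card K" using card_ge_2_if_is_subfield[OF K] by simp
  obtain e where e: "card (subspace_sum U W) = card K ^ e"
    using card_subspace_eq_power[OF K is_subspace_subspace_sum[OF U(1) W(1)]] by blast
  have U_sum: "U \<subseteq> subspace_sum U W" by (rule subspace_sum_superset1[OF W(1)])
  have "e \<le> 3" using card_mono[of UNIV "subspace_sum U W"] e card_UNIV Q by simp
  moreover have "2 \<le> e" using card_mono[OF _ U_sum] e U(2) Q by simp
  moreover have "e \<noteq> 2"
  proof
    assume "e = 2"
    then have "U = subspace_sum U W" using U_sum e U(2) by (simp add: card_subset_eq)
    then have "W \<subseteq> U" using subspace_sum_superset2[OF U(1)] by blast
    then have "W = U" using U(2) W(2) by (intro card_subset_eq) auto
    then show False using \<open>U \<noteq> W\<close> by simp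
  qed
  ultimately have "e = 3" by simp
  then show sum: "card (subspace_sum U W) = card K ^ 3" using e by simp
  have "card K ^ 3 * card (U \<inter> W) = card K ^ 3 * card K"
    using card_subspace_sum_mult_card_Int[OF K U(1) W(1)] sum U(2) W(2)
    by (simp add: power_add[symmetric] power_Suc[symmetric] mult.commute)
  then show "card (U \<inter> W) = card K" using Q by (cases "K = {}") auto
qed

section \<open>The weaved flag\<close>

lemma one_le_if_notin_subfield: "x \<notin> subfield q m \<Longrightarrow> 1 \<le> m"
  by (cases m) (simp_all add: subfield_def)

lemma strict_chain_growth:
  fixes m :: "nat \<Rightarrow> nat"
  assumes "\<forall>i. 1 \<le> i \<and> i \<le> k \<longrightarrow> m i < m (Suc i)"
  shows "m 1 + k \<le> m (Suc k)"
  using assms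
proof (induction k)
  case (Suc k)
  then have "m 1 + k \<le> m (Suc k)" "m (Suc k) < m (Suc (Suc k))" by auto
  then show ?case by simp
qed simp

definition max_subspace_dist :: "nat \<Rightarrow> nat \<Rightarrow> nat" where
  "max_subspace_dist n t = (if t \<le> n div 2 then 2 * t else 2 * (n - t))"

locale weaved_flag_orbit = galois_field q n \<alpha> for q n :: nat and \<alpha> :: "'a::{finite,field}" +
  fixes k :: nat and m :: "nat \<Rightarrow> nat" and \<beta> :: 'a
  assumes k_pos: "1 \<le> k"
    and m_mono: "\<forall>i. 1 \<le> i \<and> i \<le> k \<longrightarrow> m i < m (Suc i)"
    and m_dvd: "\<forall>i. 1 \<le> i \<and> i \<le> k \<longrightarrow> m i dvd m (Suc i)"
    and m_last: "m (Suc k) = n"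
    and beta_nonzero: "\<beta> \<noteq> 0"
    and beta_notin: "\<beta> \<notin> subfield q (m 1)"
    and beta_powers: "{\<beta> ^ j | j::nat. True} \<inter> (subfield q (m 1) - {0})
                 = {\<beta> ^ j | j::nat. True} \<inter> (subfield q (m k) - {0})"
    and ratio_le_3: "n div m k \<le> 3"
begin

lemma m_1_pos: "1 \<le> m 1"
  using beta_notin by (rule one_le_if_notin_subfield)

lemma m_chain:
  assumes "1 \<le> i" "i \<le> i'" "i' \<le> Suc k" shows "m i dvd m i' \<and> m i \<le> m i'"
  using assms(2,3)
proof (induction i' rule: dec_induct)
  case (step i')
  then have "m i' < m (Suc i')" "m i' dvd m (Suc i')" using m_mono m_dvd assms(1) by auto
  then show ?case using step by (auto intro: dvd_trans)
qed simp

lemma m_pos: "1 \<le> i \<Longrightarrow> i \<le> Suc k \<Longrightarrow> 1 \<le> m i"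
  using m_chain[of 1 i] m_1_pos by auto

lemma m_dvd_n: "1 \<le> i \<Longrightarrow> i \<le> Suc k \<Longrightarrow> m i dvd n"
  using m_chain[of i "Suc k"] m_last by auto

lemma weave_dim_less:
  assumes "1 \<le> i" "i \<le> k" "j < m (Suc i) div m i" shows "j * m i < m (Suc i)"
proof -
  have "(j + 1) * m i \<le> (m (Suc i) div m i) * m i" using assms(3) by (intro mult_le_mono1) simp
  also have "\<dots> = m (Suc i)" using m_dvd assms by auto
  finally show ?thesis using m_pos[of i] assms by simp
qed

lemma ratio_ge_2: assumes "1 \<le> i" "i \<le> k" shows "2 \<le> m (Suc i) div m i"
proof -
  obtain L where L: "m (Suc i) = m i * L" using m_dvd assms by blast
  then have "1 < L" using m_mono assms by (cases L) auto
  then show ?thesis using L m_pos[of i] assms by simp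
qed

lemma two_m_k_le_n: "2 * m k \<le> n"
proof -
  have "2 * m k \<le> (m (Suc k) div m k) * m k" using ratio_ge_2[OF k_pos]
    by (intro mult_le_mono1) simp
  also have "\<dots> = n" using m_dvd k_pos m_last by auto
  finally show ?thesis .
qed

lemma card_weave:
  "1 \<le> i \<Longrightarrow> i \<le> k \<Longrightarrow> j < m (Suc i) div m i \<Longrightarrow> card (weave_sub q n \<alpha> m i j) = q ^ (j * m i)"
  using card_weave_sub[of m i j] m_dvd m_mono m_dvd_n[of "Suc i"] m_pos[of i]
  by (simp add: mult.commute)

lemma Fq_subspace_weave_sub: "Fq_subspace q (weave_sub q n \<alpha> m i j)"
  using is_subspace_subfield_mono[OF is_subspace_weave_sub subfield_mono[OF one_dvd]]
  by (simp add: Fq_subspace_iff)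

lemma weave_sub_subset_subfield_m_k:
  assumes "1 \<le> i" "i \<le> k" "i < k \<or> j = 1"
  shows "weave_sub q n \<alpha> m i j \<subseteq> (subfield q (m k) :: 'a set)"
proof (cases "i < k")
  case True
  have "weave_sub q n \<alpha> m i j \<subseteq> subfield q (m (Suc i))"
    using m_dvd m_dvd_n[of "Suc i"] m_pos[of "Suc i"] assms
    by (intro weave_sub_subset_subfield) auto
  also have "\<dots> \<subseteq> subfield q (m k)" using m_chain[of "Suc i" k] True by (intro subfield_mono) auto
  finally show ?thesis .
qed (use assms weave_sub_1 in auto)

lemma subspace_dist_weave_sub_top:
  assumes n: "n = 3 * m k" and \<gamma>: "\<gamma> \<notin> subfield q (m k)"
  shows "subspace_dist q (weave_sub q n \<alpha> m k 2) (scale_set \<gamma> (weave_sub q n \<alpha> m k 2)) = n - m k"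
proof -
  define W where "W = weave_sub q n \<alpha> m k 2"
  define K where "K = (subfield q (m k) :: 'a set)"
  have K: "is_subfield K" unfolding K_def by (rule is_subfield_subfield)
  have "0 \<in> K" using K by (simp add: is_subfield_def)
  then have "\<gamma> \<noteq> 0" using \<gamma> by (auto simp: K_def)
  have card_K: "card K = q ^ m k" unfolding K_def using m_dvd_n m_pos k_pos
    by (intro card_subfield) auto
  have card_UNIV': "card (UNIV :: 'a set) = card K ^ 3" using card_UNIV n card_K
    by (simp add: power_mult mult.commute)
  have ratio: "2 < m (Suc k) div m k" using n m_last m_pos[of k] k_pos by simp
  have W_K: "is_subspace K W" unfolding W_def K_def by (rule is_subspace_weave_sub)
  have "card W = card K ^ 2" using card_weave[OF k_pos order.refl ratio] card_K
    by (simp add: W_def power_mult mult.commute)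
  moreover have "1 \<in> W"
    using weave_sub_mono[of 1 2 m k] weave_sub_1 K unfolding W_def K_def is_subfield_def by auto
  ultimately have "scale_set \<gamma> W \<noteq> W" using scale_set_plane_ne[OF K card_UNIV' W_K] \<gamma> K_def by blast
  then have "card (subspace_sum W (scale_set \<gamma> W)) = card K ^ 3" "card (W \<inter> scale_set \<gamma> W) = card K"
    using planes_in_three_space[OF K card_UNIV' W_K \<open>card W = _\<close> is_subspace_scale_set[OF W_K]]
      card_scale_set[OF \<open>\<gamma> \<noteq> 0\<close>] \<open>card W = _\<close> by auto
  then have "card (subspace_sum W (scale_set \<gamma> W)) = q ^ n" "card (W \<inter> scale_set \<gamma> W) = q ^ m k"
    using card_K n by (simp_all add: power_mult mult.commute)
  moreover have "Fq_subspace q W" unfolding W_def by (rule Fq_subspace_weave_sub)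
  ultimately show ?thesis
    unfolding W_def by (simp add: subspace_dist_of_card Fq_subspace_iff is_subspace_scale_set)
qed

text \<open>All weaved subspaces lie in \<open>subfield q (m k)\<close> except the last one when \<open>n = 3 m_k\<close>.\<close>

lemma subspace_dist_weave_sub:
  assumes ij: "1 \<le> i" "i \<le> k" "1 \<le> j" "j < m (Suc i) div m i" and \<gamma>: "\<gamma> \<notin> subfield q (m k)"
  shows "subspace_dist q (weave_sub q n \<alpha> m i j) (scale_set \<gamma> (weave_sub q n \<alpha> m i j))
       = max_subspace_dist n (j * m i)"
proof (cases "i < k \<or> j = 1")
  case True
  then have "j * m i \<le> m k"
    using weave_dim_less[OF ij(1,2,4)] m_chain[of "Suc i" k] m_chain[of i k] ij
    by (auto simp: less_Suc_eq_le)
  then have "j * m i \<le> n div 2" using two_m_k_le_n by simp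
  moreover have "subspace_dist q (weave_sub q n \<alpha> m i j) (scale_set \<gamma> (weave_sub q n \<alpha> m i j))
      = 2 * (j * m i)"
    using Fq_subspace_weave_sub card_weave[OF ij(1,2,4)] is_subfield_subfield
      weave_sub_subset_subfield_m_k[OF ij(1,2) True] \<gamma>
    by (rule subspace_dist_scale_set_of_subset_subfield)
  ultimately show ?thesis by (simp add: max_subspace_dist_def)
next
  case False
  then have "i = k" "2 \<le> j" using ij by auto
  moreover have "m (Suc k) div m k = n div m k" using m_last by simp
  ultimately have "j = 2" "n div m k = 3" using ij(4) ratio_le_3 by auto
  moreover have "m k dvd n" using m_dvd_n k_pos by simp
  ultimately have "n = 3 * m k" by (metis dvd_mult_div_cancel mult.commute)
  then show ?thesis
    using subspace_dist_weave_sub_top[OF _ \<gamma>] \<open>i = k\<close> \<open>j = 2\<close> m_pos[of k] k_pos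
    by (simp add: max_subspace_dist_def)
qed

end

section \<open>The orbit code\<close>

definition weave_indices :: "nat \<Rightarrow> (nat \<Rightarrow> nat) \<Rightarrow> (nat \<times> nat) list" where
  "weave_indices k m = concat (map (\<lambda>i. map (\<lambda>j. (i, j)) [1..<m (Suc i) div m i]) [1..<Suc k])"

lemma mem_weave_indices:
  "(i, j) \<in> set (weave_indices k m) \<longleftrightarrow> 1 \<le> i \<and> i \<le> k \<and> 1 \<le> j \<and> j < m (Suc i) div m i"
  by (auto simp: weave_indices_def)

lemma weaved_flag_eq:
  "weaved_flag q n \<alpha> m k = map (\<lambda>(i, j). weave_sub q n \<alpha> m i j) (weave_indices k m)"
  by (simp add: weaved_flag_def weave_indices_def map_concat comp_def)

lemma weaved_type_eq: "weaved_type m k = map (\<lambda>(i, j). j * m i) (weave_indices k m)"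
  by (simp add: weaved_type_def weave_indices_def map_concat comp_def)

lemma sorted_wrt_concat_map_pairs:
  assumes "sorted_wrt (<) is" "\<And>i. sorted_wrt (<) (f i :: nat list)"
  shows "sorted_wrt (<) (concat (map (\<lambda>i. map (\<lambda>j. (i :: nat, j)) (f i)) is))"
  using assms(1)
proof (induction "is")
  case (Cons i "is")
  have "sorted_wrt (<) (map (\<lambda>j. (i, j)) (f i))"
    using assms(2)[of i] by (simp add: sorted_wrt_map less_prod_simp)
  moreover have "\<forall>x\<in>set (map (\<lambda>j. (i, j)) (f i)).
      \<forall>y\<in>set (concat (map (\<lambda>i. map (\<lambda>j. (i, j)) (f i)) is)). x < y"
    using Cons.prems by (auto simp: less_prod_simp)
  ultimately show ?case using Cons by (simp add: sorted_wrt_append)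
qed simp

lemma sorted_weave_indices: "sorted_wrt (<) (weave_indices k m)"
  unfolding weave_indices_def
  by (rule sorted_wrt_concat_map_pairs[OF sorted_wrt_upt sorted_wrt_upt])

lemma optimum_distance_eq_sum_max_subspace_dist:
  "2 * ((\<Sum>t\<leftarrow>ts. if t \<le> n div 2 then t else 0) + (\<Sum>t\<leftarrow>ts. if t > n div 2 then n - t else 0))
   = (\<Sum>t\<leftarrow>ts. max_subspace_dist n t)"
  by (induction ts) (auto simp: max_subspace_dist_def)

context weaved_flag_orbit
begin

definition scaled_flag :: "'a \<Rightarrow> 'a set list" where
  "scaled_flag c = map (\<lambda>(i, j). scale_set c (weave_sub q n \<alpha> m i j)) (weave_indices k m)"

lemma flag_orbit_eq: "flag_orbit \<beta> (weaved_flag q n \<alpha> m k) = {scaled_flag (\<beta> ^ e) | e. True}"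
  unfolding flag_orbit_def weaved_flag_eq scaled_flag_def scale_set_def
  by (simp add: comp_def split_def)

lemma weave_sub_psubset:
  assumes "(i, j) \<in> set (weave_indices k m)" "(i', j') \<in> set (weave_indices k m)"
    "(i, j) < (i', j')"
  shows "weave_sub q n \<alpha> m i j \<subset> weave_sub q n \<alpha> m i' j'"
proof -
  have ij: "1 \<le> i" "i \<le> k" "1 \<le> j" "j < m (Suc i) div m i"
    and ij': "1 \<le> i'" "i' \<le> k" "1 \<le> j'" "j' < m (Suc i') div m i'"
    using assms(1,2) by (auto simp: mem_weave_indices)
  have "weave_sub q n \<alpha> m i j \<subseteq> weave_sub q n \<alpha> m i' j' \<and> j * m i < j' * m i'"
  proof (cases "i < i'")
    case True
    have "weave_sub q n \<alpha> m i j \<subseteq> subfield q (m (Suc i))"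
      using m_dvd m_dvd_n[of "Suc i"] m_pos[of "Suc i"] ij by (intro weave_sub_subset_subfield) auto
    also have "\<dots> \<subseteq> subfield q (m i')" using m_chain[of "Suc i" i'] True ij'
      by (intro subfield_mono) auto
    also have "\<dots> = weave_sub q n \<alpha> m i' 1" by (rule weave_sub_1[symmetric])
    also have "\<dots> \<subseteq> weave_sub q n \<alpha> m i' j'" by (rule weave_sub_mono[OF ij'(3)])
    finally have "weave_sub q n \<alpha> m i j \<subseteq> weave_sub q n \<alpha> m i' j'" .
    moreover have "j * m i < m (Suc i)" by (rule weave_dim_less[OF ij(1,2,4)])
    moreover have "m (Suc i) \<le> m i'" using m_chain[of "Suc i" i'] True ij' by auto
    moreover have "m i' \<le> j' * m i'" using ij'(3) by simp
    ultimately show ?thesis by linarith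
  next
    case False
    then have "i = i'" "j < j'" using assms(3) by (auto simp: less_prod_simp)
    then show ?thesis using weave_sub_mono[of j j'] m_pos[of i] ij by auto
  qed
  moreover have "card (weave_sub q n \<alpha> m i j) < card (weave_sub q n \<alpha> m i' j')"
    using calculation card_weave[OF ij(1,2,4)] card_weave[OF ij'(1,2,4)] q_ge_2
    by (simp add: power_strict_increasing)
  ultimately show ?thesis by auto
qed

lemma is_flag_of_type_scaled_flag:
  assumes "c \<noteq> 0" shows "is_flag_of_type q (weaved_type m k) (scaled_flag c)"
  unfolding is_flag_of_type_def
proof (intro conjI allI impI)
  show "length (scaled_flag c) = length (weaved_type m k)"
    by (simp add: scaled_flag_def weaved_type_eq)
next
  fix x assume x: "x < length (scaled_flag c)"
  obtain i j where p: "weave_indices k m ! x = (i, j)" by fastforce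
  then have "(i, j) \<in> set (weave_indices k m)" using x by (metis length_map nth_mem scaled_flag_def)
  then have ij: "1 \<le> i" "i \<le> k" "j < m (Suc i) div m i" by (auto simp: mem_weave_indices)
  have F: "Fq_subspace q (scale_set c (weave_sub q n \<alpha> m i j))"
    using Fq_subspace_weave_sub by (simp add: Fq_subspace_iff is_subspace_scale_set)
  moreover have "card (scale_set c (weave_sub q n \<alpha> m i j)) = q ^ (j * m i)"
    using card_scale_set[OF assms] card_weave[OF ij] by simp
  ultimately show "Fq_subspace q (scaled_flag c ! x)"
    "Fq_dim q (scaled_flag c ! x) = weaved_type m k ! x"
    using x p by (auto simp: scaled_flag_def weaved_type_eq Fq_dim_eq)
next
  fix x assume "Suc x < length (scaled_flag c)"
  moreover have "sorted_wrt (\<subset>) (scaled_flag c)"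
    unfolding scaled_flag_def sorted_wrt_map
  proof (rule sorted_wrt_mono_rel[OF _ sorted_weave_indices])
    fix p p' assume pp': "p \<in> set (weave_indices k m)" "p' \<in> set (weave_indices k m)" "p < p'"
    obtain i j i' j' where "p = (i, j)" "p' = (i', j')" by fastforce
    then show "(case p of (i, j) \<Rightarrow> scale_set c (weave_sub q n \<alpha> m i j))
      \<subset> (case p' of (i, j) \<Rightarrow> scale_set c (weave_sub q n \<alpha> m i j))"
      using scale_set_psubset[OF assms weave_sub_psubset] pp' by simp
  qed
  ultimately show "scaled_flag c ! x \<subset> scaled_flag c ! Suc x" by (simp add: sorted_wrt_iff_nth_less)
qed

lemma beta_power_quotient: "\<exists>s. \<beta> ^ b / \<beta> ^ a = \<beta> ^ s"
proof -
  have "\<beta> ^ b / \<beta> ^ a = \<beta> ^ b * inverse \<beta> ^ a" by (simp add: divide_inverse power_inverse)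
  also have "\<dots> = \<beta> ^ (b + (card (UNIV :: 'a set) - 2) * a)"
    using inverse_eq_power_card_UNIV_minus_2[OF beta_nonzero] by (simp add: power_add power_mult)
  finally show ?thesis by blast
qed

lemma scale_set_weave_sub_eq:
  assumes "\<gamma> \<in> subfield q (m 1)" "\<gamma> \<noteq> 0" "(i, j) \<in> set (weave_indices k m)"
  shows "scale_set \<gamma> (weave_sub q n \<alpha> m i j) = weave_sub q n \<alpha> m i j"
proof (rule card_subset_eq)
  have "m 1 dvd m i" using assms(3) m_chain[of 1 i] by (auto simp: mem_weave_indices)
  then have \<gamma>: "\<gamma> \<in> subfield q (m i)" using assms(1) subfield_mono by blast
  show "scale_set \<gamma> (weave_sub q n \<alpha> m i j) \<subseteq> weave_sub q n \<alpha> m i j"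
  proof
    fix z assume "z \<in> scale_set \<gamma> (weave_sub q n \<alpha> m i j)"
    then obtain w where w: "w \<in> weave_sub q n \<alpha> m i j" "z = w * \<gamma>" unfolding scale_set_def by blast
    then have "\<gamma> * w \<in> weave_sub q n \<alpha> m i j"
      using is_subspace_weave_sub[of m i j] \<gamma> unfolding is_subspace_def by blast
    then show "z \<in> weave_sub q n \<alpha> m i j" using w(2) by (simp add: mult.commute)
  qed
qed (simp_all add: card_scale_set[OF assms(2)])

text \<open>This is where the hypothesis on \<open>\<langle>\<beta>\<rangle>\<close> enters: a power of \<open>\<beta>\<close> in
  \<open>subfield q (m k)\<close> already lies in \<open>subfield q (m 1)\<close> and therefore fixes the whole flag.\<close>

lemma quotient_notin_subfield:
  assumes "scaled_flag (\<beta> ^ a) \<noteq> scaled_flag (\<beta> ^ b)"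
  shows "\<beta> ^ b / \<beta> ^ a \<notin> subfield q (m k)"
proof
  define \<gamma> where "\<gamma> = \<beta> ^ b / \<beta> ^ a"
  assume "\<beta> ^ b / \<beta> ^ a \<in> subfield q (m k)"
  moreover have "\<gamma> \<noteq> 0" using beta_nonzero by (simp add: \<gamma>_def)
  moreover obtain s where "\<gamma> = \<beta> ^ s" using beta_power_quotient \<gamma>_def by blast
  ultimately have "\<gamma> \<in> subfield q (m 1)" using beta_powers unfolding \<gamma>_def by blast
  moreover have "\<beta> ^ b = \<gamma> * \<beta> ^ a" using beta_nonzero by (simp add: \<gamma>_def)
  ultimately have "scale_set (\<beta> ^ b) (weave_sub q n \<alpha> m i j)
      = scale_set (\<beta> ^ a) (weave_sub q n \<alpha> m i j)"
    if "(i, j) \<in> set (weave_indices k m)" for i j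
    using scale_set_weave_sub_eq[OF _ \<open>\<gamma> \<noteq> 0\<close> that] by (simp flip: scale_set_scale_set)
  then have "scaled_flag (\<beta> ^ a) = scaled_flag (\<beta> ^ b)" unfolding scaled_flag_def by auto
  then show False using assms by simp
qed

lemma flag_dist_scaled_flag:
  assumes "scaled_flag (\<beta> ^ a) \<noteq> scaled_flag (\<beta> ^ b)"
  shows "flag_dist q (scaled_flag (\<beta> ^ a)) (scaled_flag (\<beta> ^ b))
       = (\<Sum>t\<leftarrow>weaved_type m k. max_subspace_dist n t)"
proof -
  define \<gamma> where "\<gamma> = \<beta> ^ b / \<beta> ^ a"
  have \<gamma>: "\<gamma> \<notin> subfield q (m k)" unfolding \<gamma>_def by (rule quotient_notin_subfield[OF assms])
  have "\<beta> ^ b = \<gamma> * \<beta> ^ a" using beta_nonzero by (simp add: \<gamma>_def)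
  have dist: "subspace_dist q (scale_set (\<beta> ^ a) (weave_sub q n \<alpha> m i j))
      (scale_set (\<beta> ^ b) (weave_sub q n \<alpha> m i j))
      = max_subspace_dist n (j * m i)" if "(i, j) \<in> set (weave_indices k m)" for i j
  proof -
    let ?W = "weave_sub q n \<alpha> m i j"
    have "scale_set (\<beta> ^ b) ?W = scale_set (\<beta> ^ a) (scale_set \<gamma> ?W)"
      using \<open>\<beta> ^ b = \<gamma> * \<beta> ^ a\<close> by (simp add: scale_set_scale_set)
    moreover have "Fq_subspace q (scale_set \<gamma> ?W)"
      using Fq_subspace_weave_sub by (simp add: Fq_subspace_iff is_subspace_scale_set)
    ultimately have "subspace_dist q (scale_set (\<beta> ^ a) ?W) (scale_set (\<beta> ^ b) ?W)
        = subspace_dist q ?W (scale_set \<gamma> ?W)"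
      using subspace_dist_scale_set[of "\<beta> ^ a"] beta_nonzero Fq_subspace_weave_sub by simp
    also have "\<dots> = max_subspace_dist n (j * m i)"
      using that \<gamma> by (intro subspace_dist_weave_sub) (auto simp: mem_weave_indices)
    finally show ?thesis .
  qed
  have "subspace_dist q (scaled_flag (\<beta> ^ a) ! x) (scaled_flag (\<beta> ^ b) ! x)
      = max_subspace_dist n (weaved_type m k ! x)" if "x < length (weaved_type m k)" for x
  proof -
    obtain i j where p: "weave_indices k m ! x = (i, j)" by fastforce
    moreover have "x < length (weave_indices k m)" using that by (simp add: weaved_type_eq)
    ultimately show ?thesis using dist nth_mem by (fastforce simp: scaled_flag_def weaved_type_eq)
  qed
  then have "flag_dist q (scaled_flag (\<beta> ^ a)) (scaled_flag (\<beta> ^ b))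
      = (\<Sum>x<length (weaved_type m k). max_subspace_dist n (weaved_type m k ! x))"
    unfolding flag_dist_def by (intro sum.cong) (simp_all add: scaled_flag_def weaved_type_eq)
  also have "\<dots> = (\<Sum>t\<leftarrow>weaved_type m k. max_subspace_dist n t)"
    by (simp add: sum_list_sum_nth atLeast0LessThan)
  finally show ?thesis .
qed

lemma scaled_flag_1_ne: "scaled_flag 1 \<noteq> scaled_flag \<beta>"
proof
  assume eq: "scaled_flag 1 = scaled_flag \<beta>"
  have "(1, 1) \<in> set (weave_indices k m)" using ratio_ge_2[of 1] k_pos
    by (simp add: mem_weave_indices)
  then obtain x where "x < length (weave_indices k m)" "weave_indices k m ! x = (1, 1)"
    by (metis in_set_conv_nth)
  then have "weave_sub q n \<alpha> m 1 1 = scale_set \<beta> (weave_sub q n \<alpha> m 1 1)"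
    using arg_cong[OF eq, of "\<lambda>F. F ! x"] by (simp add: scaled_flag_def scale_set_1)
  then have "subfield q (m 1) = scale_set \<beta> (subfield q (m 1))" by (simp only: weave_sub_1)
  moreover have "1 * \<beta> \<in> scale_set \<beta> (subfield q (m 1))"
    using is_subfield_subfield[of "m 1"] unfolding scale_set_def is_subfield_def by blast
  ultimately show False using beta_notin by simp
qed

lemma flag_dists_orbit:
  "{flag_dist q F G | F G. F \<in> {scaled_flag (\<beta> ^ e) | e. True} \<and> G \<in> {scaled_flag (\<beta> ^ e) | e. True}
      \<and> F \<noteq> G}
   = {\<Sum>t\<leftarrow>weaved_type m k. max_subspace_dist n t}" (is "?dists = {?D}")
proof (intro equalityI subsetI)
  fix d assume "d \<in> ?dists"
  then obtain a b where "scaled_flag (\<beta> ^ a) \<noteq> scaled_flag (\<beta> ^ b)"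
    "d = flag_dist q (scaled_flag (\<beta> ^ a)) (scaled_flag (\<beta> ^ b))" by blast
  then show "d \<in> {?D}" by (simp add: flag_dist_scaled_flag)
next
  have ne: "scaled_flag (\<beta> ^ 0) \<noteq> scaled_flag (\<beta> ^ 1)" using scaled_flag_1_ne by simp
  fix d assume "d \<in> {?D}"
  then have "d = flag_dist q (scaled_flag (\<beta> ^ 0)) (scaled_flag (\<beta> ^ 1))"
    using flag_dist_scaled_flag[OF ne] by simp
  then show "d \<in> ?dists" using ne by blast
qed

lemma optimum_distance_orbit:
  "optimum_distance_flag_code q n (weaved_type m k) (flag_orbit \<beta> (weaved_flag q n \<alpha> m k))"
proof -
  have "\<forall>F\<in>{scaled_flag (\<beta> ^ e) | e. True}. is_flag_of_type q (weaved_type m k) F"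
    using is_flag_of_type_scaled_flag beta_nonzero by auto
  then show ?thesis
    unfolding optimum_distance_flag_code_def min_flag_dist_def flag_orbit_eq
    using flag_dists_orbit optimum_distance_eq_sum_max_subspace_dist by simp
qed

end

theorem mainTheorem13:
  fixes q n k :: nat and m :: "nat \<Rightarrow> nat" and \<alpha> \<beta> :: "'a::{finite,field}"
  assumes q_pp: "\<exists>p r. prime p \<and> 0 < r \<and> q = p ^ r"
    and card: "card (UNIV :: 'a set) = q ^ n"
    and k_pos: "1 \<le> k"
    and m_mono: "\<forall>i. 1 \<le> i \<and> i \<le> k \<longrightarrow> m i < m (Suc i)"
    and m_dvd: "\<forall>i. 1 \<le> i \<and> i \<le> k \<longrightarrow> m i dvd m (Suc i)"
    and m_last: "m (Suc k) = n"
    and prim: "\<forall>x::'a. x \<noteq> 0 \<longrightarrow> (\<exists>j::nat. x = \<alpha> ^ j)"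
    and beta_nz: "\<beta> \<noteq> 0"
    and beta_not: "\<beta> \<notin> subfield q (m 1)"
    and beta_cap: "{\<beta> ^ j | j::nat. True} \<inter> (subfield q (m 1) - {0})
                 = {\<beta> ^ j | j::nat. True} \<inter> (subfield q (m k) - {0})"
    and L_le3: "n div m k \<le> 3"
  shows "optimum_distance_flag_code q n (weaved_type m k) (flag_orbit \<beta> (weaved_flag q n \<alpha> m k))"
proof -
  have "2 \<le> n"
    using strict_chain_growth[OF m_mono] one_le_if_notin_subfield[OF beta_not] m_last k_pos by simp
  interpret weaved_flag_orbit q n \<alpha> k m \<beta>
    by unfold_locales
      (fact q_pp card prim \<open>2 \<le> n\<close> k_pos m_mono m_dvd m_last beta_nz beta_not beta_cap L_le3)+
  show ?thesis by (rule optimum_distance_orbit)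
qed

end
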